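(* Let $(k_n)_{n\geq1}$ be scalars and let $\kappa$ be the infinitesimal character of the gap-insertion Hopf algebra $\mathbf{H}$ of noncrossing partitions with $\kappa(J_n)=k_n$ for $n\geq1$, where $J_n=\{\{1\},\dots,\{n\}\}$, and $\kappa(P)=0$ for every other noncrossing partition. Let $K$ be the character of $\mathbf{B}$ with $K(P)=\kappa(P)$ for all nonempty noncrossing partitions $P$, and $\mathcal{E}_\prec(\kappa)$ the unique $\phi\in\mathbf H^*$ with $\phi=\varepsilon+\kappa\prec\phi$. Then for every noncrossing partition $P$ of $[n]$ with $k$ blocks, $$\mathcal{E}_\prec(\kappa)(P)=(\psi_\prec\curvearrowleft K)(P)=\sum_{Q\geq P}K(P/Q)=\begin{cases}0&\text{if }k<n,\\ \displaystyle\sum_{Q\in\operatorname{NCP}(n)}\prod_{\pi\in Q}k_{\sharp\pi}&\text{if }k=n,\end{cases}$$ where $\psi_\prec$ is the unique element of $\mathbf H^*$ with $\psi_\prec=\varepsilon+e\prec\psi_\prec$ and the middle sum runs over noncrossing partitions $Q$ of $[n]$ coarser than $P$.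
   Context: $\operatorname{NCP}(n)$: noncrossing partitions of $[n]$ (no $a<c<b<d$ with $a,b$ in one block and $c,d$ in another); partitions of finite linearly ordered sets are identified with partitions of $[n]$ via the order-preserving bijection; $P_{|X}$ induced partition; $\sharp\pi$ block size. $\operatorname{Conv}(X)=\{\min X,\dots,\max X\}$; on blocks $\pi\to\rho$ iff $\operatorname{Conv}(\pi)\cap\rho\neq\emptyset$ (transitively closed). Upperset $U$: ($\pi\in U,\pi\to\rho$)$\Rightarrow\rho\in U$; lowerset $L$: ($\pi\in L,\sigma\to\pi$)$\Rightarrow\sigma\in L$. Cut $(L,U)$: lowerset $L$ and complement $U$; $L$ identified with the restriction of $P$ to the union of its blocks, elements $x_1<\dots<x_k$; $D_0=\{y<x_1\}$, $D_i=\{x_i<y<x_{i+1}\}$, $D_k=\{y>x_k\}$, $U_i=P_{|D_i}$, $\overline U$ ordered product of nonempty $U_i$. $\mathbf H$: free associative unital algebra on nonempty noncrossing partitions; basis of multipartitions (viewed as partitions of $[n_1+\dots+n_r]$ by shifting); cuts of multipartitions are tuples of cuts, $L=L_1\cdots L_r$, $\overline U=\overline{U_1}\cdots\overline{U_r}$. Counit $\varepsilon$. $\Delta_\prec(P)=\sum_{\text{cuts},1\in L}L\otimes\overline U$; $(f\prec g)(\mathbf1)=0$, $(f\prec g)(x)=(f\otimes g)\Delta_\prec(x)$ on nonempty multipartitions. Infinitesimal characters: linear forms vanishing on $\mathbf1$ and on products of two nonempty monomials. $e$: infinitesimal character with $e(P)=1$ for one-block noncrossing $P$ and $0$ on other noncrossing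 partitions. $\mathbf B$: free commutative unital algebra on nonempty noncrossing partitions; characters are unital algebra maps to $\mathbb K$. For noncrossing $P\leq Q$ (refinement), $Q=\{\tau_1,\dots,\tau_l\}$, $P/Q=P_{|\tau_1}\cdots P_{|\tau_l}$. Coaction $\rho(P)=\sum_{Q\geq P\text{ noncrossing}}Q\otimes P/Q$ (algebra morphism $\mathbf H\to\mathbf H\otimes\mathbf B$); $\alpha\curvearrowleft\phi=(\alpha\otimes\phi)\circ\rho$. *)

theory Defs
  imports Main "HOL-Library.Multiset" "HOL-Library.Disjoint_Sets"
begin

type_synonym part = "nat set set"
type_synonym mpart = "part list"       (* a multipartition = monomial of H; [] is the unit 1 *)

definition noncrossing :: "part \<Rightarrow> bool" where
  "noncrossing P \<longleftrightarrow> \<not> (\<exists>B1\<in>P. \<exists>B2\<in>P. B1 \<noteq> B2 \<and>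
     (\<exists>a b c d. a < c \<and> c < b \<and> b < d \<and> a \<in> B1 \<and> b \<in> B1 \<and> c \<in> B2 \<and> d \<in> B2))"

definition ncp :: "nat \<Rightarrow> part \<Rightarrow> bool" where
  "ncp n P \<longleftrightarrow> partition_on {1..n} P \<and> noncrossing P"

(* basis elements of H: words in nonempty noncrossing partitions *)
definition valid_mp :: "mpart \<Rightarrow> bool" where
  "valid_mp xs \<longleftrightarrow> (\<forall>P\<in>set xs. \<exists>n\<ge>1. ncp n P)"

(* identification of a partition of a finite set of naturals with one of [m]
   via the order-preserving bijection *)
definition stdz :: "part \<Rightarrow> part" where
  "stdz P = (\<lambda>B. (\<lambda>x. card {y\<in>\<Union>P. y < x} + 1) ` B) ` P"

(* induced partition P_{|X} (as a partition of X, before standardization) *)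
definition restr :: "part \<Rightarrow> nat set \<Rightarrow> part" where
  "restr P X = {B \<inter> X | B. B \<in> P \<and> B \<inter> X \<noteq> {}}"

definition conv :: "nat set \<Rightarrow> nat set" where
  "conv X = {Min X..Max X}"

definition arrow :: "part \<Rightarrow> (nat set \<times> nat set) set" where
  "arrow P = {(\<pi>, \<rho>). \<pi> \<in> P \<and> \<rho> \<in> P \<and> conv \<pi> \<inter> \<rho> \<noteq> {}}\<^sup>+"

definition lowerset :: "part \<Rightarrow> part \<Rightarrow> bool" where
  "lowerset P L \<longleftrightarrow> L \<subseteq> P \<and> (\<forall>\<pi>\<in>L. \<forall>\<sigma>. (\<sigma>, \<pi>) \<in> arrow P \<longrightarrow> \<sigma> \<in> L)"

(* the gaps D_0, ..., D_k determined by the elements x_1 < ... < x_k of L in [n] *)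
definition gaps :: "nat \<Rightarrow> nat set \<Rightarrow> nat set list" where
  "gaps n X = (let bs = 0 # sorted_list_of_set X @ [n + 1]
               in map (\<lambda>i. {bs ! i <..< bs ! (i + 1)}) [0..<length bs - 1])"

(* U-bar: ordered product of the nonempty U_i = P_{|D_i} *)
definition ubar :: "part \<Rightarrow> part \<Rightarrow> mpart" where
  "ubar P L = map (\<lambda>D. stdz (restr P D))
                (filter (\<lambda>D. D \<noteq> {}) (gaps (card (\<Union>P)) (\<Union>L)))"

(* L = L_1 ... L_r (empty L_i are the unit) *)
definition lword :: "part list \<Rightarrow> mpart" where
  "lword ls = map stdz (filter (\<lambda>L. L \<noteq> {}) ls)"

definition uword :: "mpart \<Rightarrow> part list \<Rightarrow> mpart" where
  "uword xs ls = concat (map (\<lambda>(P, L). ubar P L) (zip xs ls))"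

definition cuts1 :: "mpart \<Rightarrow> part list set" where
  "cuts1 xs = {ls. length ls = length xs \<and> (\<forall>i<length xs. lowerset (xs ! i) (ls ! i))
                  \<and> 1 \<in> \<Union>(hd ls)}"

(* half-shuffle f \<prec> g on H^*, linear forms given by their values on the basis *)
definition prec :: "(mpart \<Rightarrow> 'a::comm_ring_1) \<Rightarrow> (mpart \<Rightarrow> 'a) \<Rightarrow> mpart \<Rightarrow> 'a" where
  "prec f g xs = (if xs = [] then 0
                  else (\<Sum>ls\<in>cuts1 xs. f (lword ls) * g (uword xs ls)))"

definition eps :: "mpart \<Rightarrow> 'a::comm_ring_1" where
  "eps xs = (if xs = [] then 1 else 0)"

definition Jpart :: "nat \<Rightarrow> part" where
  "Jpart n = (\<lambda>i. {i}) ` {1..n}"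

definition kappa :: "(nat \<Rightarrow> 'a::comm_ring_1) \<Rightarrow> mpart \<Rightarrow> 'a" where
  "kappa k xs = (case xs of [Q] \<Rightarrow> (if Q = Jpart (card (\<Union>Q)) then k (card (\<Union>Q)) else 0)
                 | _ \<Rightarrow> 0)"

definition e_inf :: "mpart \<Rightarrow> 'a::comm_ring_1" where
  "e_inf xs = (case xs of [Q] \<Rightarrow> (if card Q = 1 then 1 else 0) | _ \<Rightarrow> 0)"

(* monomials of B = multisets of partitions; the character of B extending a form on partitions *)
definition Kchar :: "(mpart \<Rightarrow> 'a::comm_ring_1) \<Rightarrow> part multiset \<Rightarrow> 'a" where
  "Kchar f M = prod_mset (image_mset (\<lambda>Q. f [Q]) M)"

definition refines :: "part \<Rightarrow> part \<Rightarrow> bool" where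
  "refines P Q \<longleftrightarrow> (\<forall>B\<in>P. \<exists>C\<in>Q. B \<subseteq> C)"

definition quot :: "part \<Rightarrow> part \<Rightarrow> part multiset" where
  "quot P Q = image_mset (\<lambda>\<tau>. stdz (restr P \<tau>)) (mset_set Q)"

(* (alpha \<curvearrowleft> phi)(P) = (alpha \<otimes> phi)(rho(P)) for a partition P of [n] *)
definition act :: "(mpart \<Rightarrow> 'a::comm_ring_1) \<Rightarrow> (part multiset \<Rightarrow> 'a) \<Rightarrow> nat \<Rightarrow> part \<Rightarrow> 'a" where
  "act \<alpha> \<phi> n P = (\<Sum>Q\<in>{Q. ncp n Q \<and> refines P Q}. \<alpha> [Q] * \<phi> (quot P Q))"

end

theory Submission
  imports Defs "HOL-Library.FuncSet"
begin

text \<open>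
  Both recursions are solved by induction on the sizes of the factors: in a cut with
  \<open>1 \<in> L\<close>, every factor of \<open>U\<close> is the restriction of \<open>P\<close> to a gap of \<open>L\<close>, hence strictly
  smaller than \<open>P\<close>. Since \<open>e\<close> and \<open>\<kappa>\<close> vanish on products, only cuts whose lower part lies in
  the first factor count. For \<open>e\<close> the lower part must be the block of \<open>1\<close> alone, which
  gives \<open>\<psi>\<^sub>\<prec> = 1\<close>. For \<open>\<kappa>\<close> the lower part must consist of singletons: if \<open>P\<close> has a block
  with two or more elements, that block either lies in the lower part or inside one gap, and in both
  cases a factor vanishes; if \<open>P = J\<^sub>n\<close>, the lower parts are the sets \<open>S \<ni> 1\<close>, and
  \<open>\<Sum>\<^sub>S k\<^bsub>#S\<^esub> \<Prod>\<^bsub>gaps G of S\<^esub> m(G)\<close> is the moment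
  \<open>m(n) = \<Sum>\<^bsub>Q \<in> NCP(n)\<^esub> \<Prod>\<^bsub>\<pi> \<in> Q\<^esub> k\<^bsub>#\<pi>\<^esub>\<close> expanded along the block \<open>S\<close> of \<open>Q\<close> containing
  \<open>1\<close>, because every other block of \<open>Q\<close> lies in a single gap of \<open>S\<close>. The sum over the
  coarsenings \<open>Q \<ge> P\<close> has the same value: every \<open>Q\<close> is coarser than \<open>J\<^sub>n\<close>, while a block of \<open>P\<close>
  with two or more elements lies in some block \<open>\<tau>\<close> of \<open>Q\<close>, so that \<open>\<kappa>(P\<^sub>|\<^sub>\<tau>) = 0\<close>. Finally, \<open>P = J\<^sub>n\<close>
  exactly when \<open>P\<close> has \<open>n\<close> blocks.
\<close>

section \<open>Standardization and noncrossing partitions\<close>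

definition std_rank :: "nat set \<Rightarrow> nat \<Rightarrow> nat" where
  "std_rank S x = card {y\<in>S. y < x} + 1"

lemma stdz_eq_std_rank: "stdz P = (`) (std_rank (\<Union>P)) ` P"
  unfolding stdz_def std_rank_def by simp

lemma strict_mono_on_std_rank: "finite S \<Longrightarrow> strict_mono_on S (std_rank S)"
proof (rule strict_mono_onI)
  fix x y assume "finite S" "x \<in> S" "y \<in> S" "x < y"
  then have "{z\<in>S. z < x} \<subset> {z\<in>S. z < y}" by auto
  then show "std_rank S x < std_rank S y"
    unfolding std_rank_def using \<open>finite S\<close> by (simp add: psubset_card_mono)
qed

lemma inj_on_std_rank: "finite S \<Longrightarrow> inj_on (std_rank S) S"
  using strict_mono_on_std_rank strict_mono_on_imp_inj_on by blast

lemma std_rank_image: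
  assumes "finite S"
  shows "std_rank S ` S = {1..card S}"
proof -
  have "std_rank S x \<in> {1..card S}" if "x \<in> S" for x
  proof -
    have "{y\<in>S. y < x} \<subset> S" using that by auto
    then show ?thesis unfolding std_rank_def using assms by (simp add: psubset_card_mono Suc_leI)
  qed
  moreover have "card (std_rank S ` S) = card S"
    using inj_on_std_rank[OF assms] by (simp add: card_image)
  ultimately show ?thesis by (simp add: card_subset_eq image_subsetI)
qed

lemma std_rank_atLeastAtMost:
  assumes "x \<in> {1..n}"
  shows "std_rank {1..n} x = x"
proof -
  have "{y\<in>{1..n}. y < x} = {1..<x}" using assms by auto
  then show ?thesis using assms unfolding std_rank_def by simp
qed

lemma noncrossingD:
  assumes "noncrossing P" "B1 \<in> P" "B2 \<in> P" "a < c" "c < b" "b < d"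
    "a \<in> B1" "b \<in> B1" "c \<in> B2" "d \<in> B2"
  shows "B1 = B2"
proof (rule ccontr)
  assume "B1 \<noteq> B2"
  with assms show False unfolding noncrossing_def by meson
qed

lemma noncrossingI:
  assumes "\<And>B1 B2 a b c d. B1 \<in> P \<Longrightarrow> B2 \<in> P \<Longrightarrow> a < c \<Longrightarrow> c < b \<Longrightarrow> b < d \<Longrightarrow>
    a \<in> B1 \<Longrightarrow> b \<in> B1 \<Longrightarrow> c \<in> B2 \<Longrightarrow> d \<in> B2 \<Longrightarrow> B1 = B2"
  shows "noncrossing P"
  using assms unfolding noncrossing_def by blast

lemma noncrossing_subset: "noncrossing P \<Longrightarrow> Q \<subseteq> P \<Longrightarrow> noncrossing Q"
  by (rule noncrossingI) (meson noncrossingD subsetD)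

lemma noncrossing_restr:
  assumes "noncrossing P"
  shows "noncrossing (restr P X)"
proof (rule noncrossingI)
  fix B1 B2 a b c d
  assume "B1 \<in> restr P X" "B2 \<in> restr P X" "a < c" "c < b" "b < d"
    "a \<in> B1" "b \<in> B1" "c \<in> B2" "d \<in> B2"
  then obtain C1 C2 where "C1 \<in> P" "C2 \<in> P" "B1 = C1 \<inter> X" "B2 = C2 \<inter> X"
    and "a < c" "c < b" "b < d" "a \<in> C1" "b \<in> C1" "c \<in> C2" "d \<in> C2"
    unfolding restr_def by blast
  then show "B1 = B2" using noncrossingD[OF assms] by metis
qed

lemma noncrossing_strict_mono_image:
  fixes h :: "nat \<Rightarrow> nat"
  assumes h: "strict_mono_on A h" and "\<Union>Q \<subseteq> A" and "noncrossing Q"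
  shows "noncrossing ((`) h ` Q)"
proof (rule noncrossingI)
  fix C1 C2 a b c d
  assume C: "C1 \<in> (`) h ` Q" "C2 \<in> (`) h ` Q" and less: "a < c" "c < b" "b < d"
    and mem: "a \<in> C1" "b \<in> C1" "c \<in> C2" "d \<in> C2"
  obtain B1 B2 where B: "B1 \<in> Q" "B2 \<in> Q" "C1 = h ` B1" "C2 = h ` B2" using C by blast
  then obtain a' b' c' d' where mem': "a' \<in> B1" "b' \<in> B1" "c' \<in> B2" "d' \<in> B2"
    and "a = h a'" "b = h b'" "c = h c'" "d = h d'"
    using mem by blast
  moreover have "a' \<in> A" "b' \<in> A" "c' \<in> A" "d' \<in> A"
    using mem' B(1,2) \<open>\<Union>Q \<subseteq> A\<close> by auto
  ultimately have "a' < c'" "c' < b'" "b' < d'" using less strict_mono_on_less[OF h] by auto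
  then have "B1 = B2" using noncrossingD[OF \<open>noncrossing Q\<close> B(1,2) _ _ _ mem'] by blast
  then show "C1 = C2" using B by simp
qed

lemma ncp_partition_on: "ncp n P \<Longrightarrow> partition_on {1..n} P"
  unfolding ncp_def by simp

lemma ncp_noncrossing: "ncp n P \<Longrightarrow> noncrossing P"
  unfolding ncp_def by simp

lemma ncp_Union: "ncp n P \<Longrightarrow> \<Union>P = {1..n}"
  unfolding ncp_def partition_on_def by simp

lemma ncp_block_subset: "ncp n P \<Longrightarrow> B \<in> P \<Longrightarrow> B \<subseteq> {1..n}"
  by (drule ncp_Union) blast

lemma ncp_block_finite: "ncp n P \<Longrightarrow> B \<in> P \<Longrightarrow> finite B"
  by (meson finite_atLeastAtMost finite_subset ncp_block_subset)

lemma ncp_finite: "ncp n P \<Longrightarrow> finite P"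
  by (meson finite_atLeastAtMost finite_elements ncp_partition_on)

lemma partition_on_block_unique:
  "partition_on A P \<Longrightarrow> B1 \<in> P \<Longrightarrow> B2 \<in> P \<Longrightarrow> x \<in> B1 \<Longrightarrow> x \<in> B2 \<Longrightarrow> B1 = B2"
  unfolding partition_on_def pairwise_def disjnt_def by blast

definition nc_partitions :: "nat set \<Rightarrow> part set" where
  "nc_partitions D = {Q. partition_on D Q \<and> noncrossing Q}"

lemma ncp_iff_nc_partitions: "ncp n Q \<longleftrightarrow> Q \<in> nc_partitions {1..n}"
  by (simp add: ncp_def nc_partitions_def)

lemma finite_nc_partitions: "finite D \<Longrightarrow> finite (nc_partitions D)"
  unfolding nc_partitions_def
  by (rule finite_subset[OF _ finitely_many_partition_on]) auto

lemma nc_partitions_strict_mono_image: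
  fixes f :: "nat \<Rightarrow> nat"
  assumes f: "strict_mono_on X f" and Q: "Q \<in> nc_partitions X"
  shows "(`) f ` Q \<in> nc_partitions (f ` X)"
proof -
  have part: "partition_on X Q" and nc: "noncrossing Q" using Q unfolding nc_partitions_def by auto
  have "{} \<notin> (`) f ` Q" using partition_onD3[OF part] by auto
  then have "partition_on (f ` X) ((`) f ` Q)"
    using partition_on_inj_image[OF part strict_mono_on_imp_inj_on[OF f]] by simp
  moreover have "noncrossing ((`) f ` Q)"
    using noncrossing_strict_mono_image[OF f _ nc] partition_onD1[OF part] by simp
  ultimately show ?thesis unfolding nc_partitions_def by blast
qed

lemma ncp_stdz:
  assumes "finite S" "partition_on S Q" "noncrossing Q"
  shows "ncp (card S) (stdz Q)"
proof -
  have "(`) (std_rank S) ` Q \<in> nc_partitions (std_rank S ` S)"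
    using nc_partitions_strict_mono_image[OF strict_mono_on_std_rank[OF assms(1)]] assms(2,3)
    unfolding nc_partitions_def by blast
  then show ?thesis
    unfolding ncp_iff_nc_partitions stdz_eq_std_rank partition_onD1[OF assms(2), symmetric]
      std_rank_image[OF assms(1)] .
qed

lemma stdz_ncp:
  assumes "ncp n P"
  shows "stdz P = P"
proof -
  have "std_rank {1..n} ` B = id ` B" if "B \<in> P" for B
    using std_rank_atLeastAtMost ncp_block_subset[OF assms that] by (intro image_cong) auto
  then show ?thesis unfolding stdz_eq_std_rank ncp_Union[OF assms] by simp
qed

lemma card_stdz:
  assumes "finite (\<Union>Q)"
  shows "card (stdz Q) = card Q"
proof -
  have "inj_on ((`) (std_rank (\<Union>Q))) Q" using inj_on_std_rank[OF assms] by (rule inj_on_image)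
  then show ?thesis unfolding stdz_eq_std_rank by (simp add: card_image)
qed

lemma stdz_singletons:
  assumes "finite S"
  shows "stdz ((\<lambda>i. {i}) ` S) = Jpart (card S)"
proof -
  have "\<Union>((\<lambda>i. {i}) ` S) = S" by auto
  then have "stdz ((\<lambda>i. {i}) ` S) = (\<lambda>j. {j}) ` (std_rank S ` S)"
    unfolding stdz_eq_std_rank by (auto simp: image_image)
  then show ?thesis unfolding std_rank_image[OF assms] Jpart_def .
qed

lemma stdz_ne_Jpart:
  assumes "finite (\<Union>Q)" "B \<in> Q" "card B \<noteq> 1"
  shows "stdz Q \<noteq> Jpart m"
proof -
  have "inj_on (std_rank (\<Union>Q)) B"
    using inj_on_subset[OF inj_on_std_rank[OF assms(1)]] assms(2) by blast
  then have "card (std_rank (\<Union>Q) ` B) \<noteq> 1" using assms(3) by (simp add: card_image)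
  moreover have "std_rank (\<Union>Q) ` B \<in> stdz Q" unfolding stdz_eq_std_rank using assms(2) by simp
  ultimately show ?thesis unfolding Jpart_def by auto
qed

section \<open>Noncrossing moments and gaps\<close>

definition nc_moment :: "(nat \<Rightarrow> 'a::comm_ring_1) \<Rightarrow> nat set \<Rightarrow> 'a" where
  "nc_moment k D = (\<Sum>Q\<in>nc_partitions D. \<Prod>\<pi>\<in>Q. k (card \<pi>))"

lemma bij_betw_nc_partitions_strict_mono_image:
  fixes h :: "nat \<Rightarrow> nat"
  assumes h: "strict_mono_on A h"
  shows "bij_betw ((`) ((`) h)) (nc_partitions A) (nc_partitions (h ` A))"
proof -
  let ?g = "inv_into A h"
  have inj: "inj_on h A" using h strict_mono_on_imp_inj_on by blast
  have g: "strict_mono_on (h ` A) ?g"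
    by (rule strict_mono_onI) (auto simp: inv_into_f_f[OF inj] strict_mono_on_less[OF h])
  have blocks: "\<pi> \<subseteq> X" if "Q \<in> nc_partitions X" "\<pi> \<in> Q" for Q \<pi> and X :: "nat set"
    using that unfolding nc_partitions_def partition_on_def by blast
  show ?thesis
  proof (rule bij_betw_byWitness[where f' = "(`) ((`) ?g)"])
    show "\<forall>Q\<in>nc_partitions A. (`) ?g ` (`) h ` Q = Q"
    proof
      fix Q assume Q: "Q \<in> nc_partitions A"
      have "?g ` h ` \<pi> = \<pi>" if "\<pi> \<in> Q" for \<pi>
        using inv_into_image_cancel[OF inj blocks[OF Q that]] .
      then have "(\<lambda>\<pi>. ?g ` h ` \<pi>) ` Q = (\<lambda>\<pi>. \<pi>) ` Q" by (rule image_cong[OF refl])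
      then show "(`) ?g ` (`) h ` Q = Q" by (simp only: image_image image_ident)
    qed
    show "\<forall>Q\<in>nc_partitions (h ` A). (`) h ` (`) ?g ` Q = Q"
    proof
      fix Q assume Q: "Q \<in> nc_partitions (h ` A)"
      have "h ` ?g ` \<pi> = \<pi>" if "\<pi> \<in> Q" for \<pi>
        using image_inv_into_cancel[OF refl blocks[OF Q that]] by blast
      then have "(\<lambda>\<pi>. h ` ?g ` \<pi>) ` Q = (\<lambda>\<pi>. \<pi>) ` Q" by (rule image_cong[OF refl])
      then show "(`) h ` (`) ?g ` Q = Q" by (simp only: image_image image_ident)
    qed
    show "(`) ((`) h) ` nc_partitions A \<subseteq> nc_partitions (h ` A)"
      using nc_partitions_strict_mono_image[OF h] by blast
    show "(`) ((`) ?g) ` nc_partitions (h ` A) \<subseteq> nc_partitions A"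
      using nc_partitions_strict_mono_image[OF g] inv_into_image_cancel[OF inj subset_refl] by auto
  qed
qed

lemma nc_moment_strict_mono_image:
  fixes h :: "nat \<Rightarrow> nat"
  assumes h: "strict_mono_on A h"
  shows "nc_moment k (h ` A) = nc_moment k A"
proof -
  have inj: "inj_on h A" using h strict_mono_on_imp_inj_on by blast
  have "(\<Prod>\<pi>\<in>(`) h ` Q. k (card \<pi>)) = (\<Prod>\<pi>\<in>Q. k (card \<pi>))" if Q: "Q \<in> nc_partitions A" for Q
  proof -
    have sub: "Q \<subseteq> Pow A" using Q unfolding nc_partitions_def partition_on_def by blast
    then have "\<Union>Q \<subseteq> A" by blast
    then have "inj_on ((`) h) Q" by (intro inj_on_image inj_on_subset[OF inj])
    moreover have "card (h ` \<pi>) = card \<pi>" if "\<pi> \<in> Q" for \<pi>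
    proof -
      have "\<pi> \<subseteq> A" using sub that by blast
      then show ?thesis by (rule card_image[OF inj_on_subset[OF inj]])
    qed
    ultimately show ?thesis by (simp add: prod.reindex)
  qed
  then have "nc_moment k (h ` A) = (\<Sum>Q\<in>nc_partitions A. \<Prod>\<pi>\<in>Q. k (card \<pi>))"
    unfolding nc_moment_def sum.reindex_bij_betw[OF bij_betw_nc_partitions_strict_mono_image[OF h], symmetric]
    by (rule sum.cong[OF refl])
  then show ?thesis unfolding nc_moment_def .
qed

lemma nc_moment_card:
  assumes "finite D"
  shows "nc_moment k D = nc_moment k {1..card D}"
  using nc_moment_strict_mono_image[OF strict_mono_on_std_rank[OF assms], of k, symmetric]
  unfolding std_rank_image[OF assms] .

text \<open>The gap \<open>D\<^sub>i\<close> of \<open>X\<close> containing \<open>x \<notin> X\<close>, described without sorting \<open>X\<close>.\<close>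

definition gap_of :: "nat \<Rightarrow> nat set \<Rightarrow> nat \<Rightarrow> nat set" where
  "gap_of n X x = {y \<in> {1..n} - X. \<forall>s\<in>X. \<not> (x < s \<and> s < y) \<and> \<not> (y < s \<and> s < x)}"

definition gap_set :: "nat \<Rightarrow> nat set \<Rightarrow> nat set set" where
  "gap_set n X = gap_of n X ` ({1..n} - X)"

lemma gap_of_self: "x \<in> {1..n} - X \<Longrightarrow> x \<in> gap_of n X x"
  unfolding gap_of_def by auto

lemma gap_of_subset: "gap_of n X x \<subseteq> {1..n} - X"
  unfolding gap_of_def by auto

lemma gap_of_sym: "y \<in> gap_of n X x \<Longrightarrow> x \<in> {1..n} - X \<Longrightarrow> x \<in> gap_of n X y"
  unfolding gap_of_def by blast

lemma gap_of_trans: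
  assumes y: "y \<in> gap_of n X x" and z: "z \<in> gap_of n X y"
  shows "z \<in> gap_of n X x"
proof -
  have "\<not> (x < s \<and> s < z) \<and> \<not> (z < s \<and> s < x)" if s: "s \<in> X" for s
  proof -
    have "\<not> (x < s \<and> s < y) \<and> \<not> (y < s \<and> s < x)" "\<not> (y < s \<and> s < z) \<and> \<not> (z < s \<and> s < y)"
      "s \<noteq> y"
      using y z s unfolding gap_of_def by auto
    then show ?thesis by linarith
  qed
  then show ?thesis using z unfolding gap_of_def by blast
qed

lemma gap_of_eq:
  assumes "x \<in> {1..n} - X" "y \<in> gap_of n X x"
  shows "gap_of n X y = gap_of n X x"
proof (intro equalityI subsetI)
  show "z \<in> gap_of n X x" if "z \<in> gap_of n X y" for z
    using gap_of_trans[OF assms(2) that] .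
  show "z \<in> gap_of n X y" if "z \<in> gap_of n X x" for z
    using gap_of_trans[OF gap_of_sym[OF assms(2,1)] that] .
qed

lemma gap_set_eq_gap_of:
  assumes "G \<in> gap_set n X" "x \<in> G"
  shows "G = gap_of n X x"
proof -
  obtain x0 where "x0 \<in> {1..n} - X" "G = gap_of n X x0" using assms(1) unfolding gap_set_def by blast
  then show ?thesis using gap_of_eq assms(2) by metis
qed

lemma gap_of_in_gap_set: "x \<in> {1..n} - X \<Longrightarrow> gap_of n X x \<in> gap_set n X"
  unfolding gap_set_def by blast

lemma partition_on_gap_set: "partition_on ({1..n} - X) (gap_set n X)"
proof (rule partition_onI)
  show "\<Union>(gap_set n X) = {1..n} - X"
    unfolding gap_set_def using gap_of_self gap_of_subset by blast
  show "disjnt G1 G2" if "G1 \<in> gap_set n X" "G2 \<in> gap_set n X" "G1 \<noteq> G2" for G1 G2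
    using gap_set_eq_gap_of that unfolding disjnt_def by blast
  show "{} \<notin> gap_set n X"
    unfolding gap_set_def using gap_of_self by blast
qed

lemma gap_set_subset: "G \<in> gap_set n X \<Longrightarrow> G \<subseteq> {1..n} - X"
  unfolding gap_set_def using gap_of_subset by blast

lemma finite_gap_set: "finite (gap_set n X)"
  unfolding gap_set_def by simp

lemma finite_gap: "G \<in> gap_set n X \<Longrightarrow> finite G"
  by (meson finite_Diff finite_atLeastAtMost finite_subset gap_set_subset)

lemma gap_set_not_separated:
  assumes "G \<in> gap_set n X" "a \<in> G" "b \<in> G" "s \<in> X"
  shows "\<not> (a < s \<and> s < b)"
proof -
  have "b \<in> gap_of n X a" using gap_set_eq_gap_of[OF assms(1,2)] assms(3) by simp
  then show ?thesis using assms(4) unfolding gap_of_def by blast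
qed

lemma gap_set_convex:
  assumes G: "G \<in> gap_set n X" and "a \<in> G" "b \<in> G" "a < c" "c < b" "c \<in> {1..n} - X"
  shows "c \<in> G"
proof -
  have "\<forall>s\<in>X. \<not> (a < s \<and> s < c) \<and> \<not> (c < s \<and> s < a)"
    using gap_set_not_separated[OF G \<open>a \<in> G\<close> \<open>b \<in> G\<close>] assms(4,5) by fastforce
  then show ?thesis using gap_set_eq_gap_of[OF G \<open>a \<in> G\<close>] assms(6) unfolding gap_of_def by blast
qed

lemma strict_sorted_nth_less_iff:
  assumes "sorted_wrt (<) (bs::nat list)" "i < length bs" "j < length bs"
  shows "bs!i < bs!j \<longleftrightarrow> i < j"
  using assms sorted_wrt_nth_less[OF assms(1)]
  by (metis linorder_neqE_nat order_less_asym order_less_irrefl)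

lemma strict_sorted_nothing_between:
  assumes "sorted_wrt (<) (bs::nat list)" "Suc i < length bs" "t \<in> set bs"
  shows "\<not> (bs!i < t \<and> t < bs!(Suc i))"
proof
  assume between: "bs!i < t \<and> t < bs!(Suc i)"
  obtain j where j: "j < length bs" "t = bs!j" using assms(3) by (auto simp: in_set_conv_nth)
  then have "i < j" "j < Suc i"
    using between strict_sorted_nth_less_iff[OF assms(1)] assms(2) by auto
  then show False by simp
qed

lemma sorted_nth_interval_cover:
  "sorted (bs::nat list) \<Longrightarrow> bs \<noteq> [] \<Longrightarrow> hd bs \<le> x \<Longrightarrow> x < last bs \<Longrightarrow>
    \<exists>i. Suc i < length bs \<and> bs!i \<le> x \<and> x < bs!(Suc i)"
proof (induction bs)
  case Nil
  then show ?case by simp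
next
  case (Cons a rest)
  show ?case
  proof (cases rest)
    case Nil
    then show ?thesis using Cons.prems by simp
  next
    case (Cons b rest')
    show ?thesis
    proof (cases "x < b")
      case True
      then show ?thesis using Cons \<open>hd (a # rest) \<le> x\<close> by (intro exI[of _ 0]) auto
    next
      case False
      then obtain i where "Suc i < length rest \<and> rest!i \<le> x \<and> x < rest!(Suc i)"
        using Cons.IH Cons.prems Cons by auto
      then show ?thesis by (intro exI[of _ "Suc i"]) auto
    qed
  qed
qed

text \<open>The gaps listed by \<^const>\<open>gaps\<close> are the open intervals between consecutive elements
  of \<open>0 < x\<^sub>1 < \<dots> < x\<^sub>k < n + 1\<close>; each nonempty one is the \<^const>\<open>gap_of\<close> of its elements.\<close>

lemma interval_eq_gap_of:
  assumes bs: "sorted_wrt (<) bs" "set bs = insert 0 (insert (Suc n) X)"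
    and X: "X \<subseteq> {1..n}" and i: "Suc i < length bs" and x: "x \<in> {bs!i<..<bs!(Suc i)}"
  shows "{bs!i<..<bs!(Suc i)} = gap_of n X x"
proof -
  have ends: "bs!i \<in> set bs" "bs!(Suc i) \<in> set bs" using i by auto
  have outside_X: "y \<in> {1..n} - X" if "y \<in> {bs!i<..<bs!(Suc i)}" for y
  proof -
    have "y \<notin> set bs" using strict_sorted_nothing_between[OF bs(1) i] that by auto
    moreover have "bs!(Suc i) \<le> Suc n" using ends(2) bs(2) X by auto
    ultimately show ?thesis using that bs(2) by auto
  qed
  show ?thesis
  proof (intro equalityI subsetI)
    fix y assume y: "y \<in> {bs!i<..<bs!(Suc i)}"
    have "s \<in> set bs" if "s \<in> X" for s using that bs(2) by auto
    then show "y \<in> gap_of n X x"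
      using strict_sorted_nothing_between[OF bs(1) i] outside_X[OF y] x y
      unfolding gap_of_def by fastforce
  next
    fix y assume y: "y \<in> gap_of n X x"
    then have y': "y \<in> {1..n} - X" and no_sep: "\<And>s. s \<in> X \<Longrightarrow> \<not> (x < s \<and> s < y) \<and> \<not> (y < s \<and> s < x)"
      unfolding gap_of_def by auto
    have "y \<notin> set bs" using y' bs(2) by auto
    then have "bs!i \<noteq> y" "bs!(Suc i) \<noteq> y" using ends by auto
    moreover have "bs!i \<in> X" if "y < bs!i" using that ends(1) bs(2) x outside_X[OF x] by auto
    moreover have "bs!(Suc i) \<in> X" if "bs!(Suc i) < y" using that ends(2) bs(2) x y' by auto
    ultimately show "y \<in> {bs!i<..<bs!(Suc i)}" using no_sep x by fastforce
  qed
qed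

lemma distinct_nonempty_intervals:
  assumes sorted: "sorted_wrt (<) (bs::nat list)"
  shows "distinct (filter (\<lambda>D. D \<noteq> {}) (map (\<lambda>i. {bs!i<..<bs!(Suc i)}) [0..<length bs - 1]))"
proof -
  define f where "f i = {bs!i <..< bs!(Suc i)}" for i
  have "inj_on f {i. i < length bs - 1 \<and> f i \<noteq> {}}"
  proof (rule inj_onI)
    have neq: False if ij: "i < j" "j < length bs - 1" "f i \<noteq> {}" "f i = f j" for i j
    proof -
      obtain x where x: "x \<in> f i" using ij(3) by auto
      have "j < length bs" using ij(2) by simp
      then have "bs!(Suc i) \<le> bs!j"
        using sorted_wrt_nth_less[OF sorted, of "Suc i" j] ij(1) by (cases "Suc i = j") auto
      moreover have "x < bs!(Suc i)" using x unfolding f_def by auto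
      moreover have "bs!j < x" using x ij(4) unfolding f_def by (metis greaterThanLessThan_iff)
      ultimately show False by simp
    qed
    show "i = j" if i: "i \<in> {i. i < length bs - 1 \<and> f i \<noteq> {}}"
      and j: "j \<in> {i. i < length bs - 1 \<and> f i \<noteq> {}}" and eq: "f i = f j" for i j
    proof (rule ccontr)
      assume "i \<noteq> j"
      then consider "i < j" | "j < i" by linarith
      then show False
      proof cases
        case 1
        then show False using neq[OF 1 _ _ eq] i j by blast
      next
        case 2
        then show False using neq[OF 2 _ _ eq[symmetric]] i j by blast
      qed
    qed
  qed
  moreover have "set (filter (\<lambda>i. f i \<noteq> {}) [0..<length bs - 1]) = {i. i < length bs - 1 \<and> f i \<noteq> {}}"
    by auto
  ultimately have "distinct (map f (filter (\<lambda>i. f i \<noteq> {}) [0..<length bs - 1]))"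
    by (simp add: distinct_map)
  then show ?thesis unfolding f_def[symmetric] by (simp add: filter_map o_def)
qed

lemma gap_bounds:
  assumes "X \<subseteq> {1..n}"
  shows "sorted_wrt (<) (0 # sorted_list_of_set X @ [n + 1])"
    and "set (0 # sorted_list_of_set X @ [n + 1]) = insert 0 (insert (Suc n) X)"
proof -
  have "finite X" using finite_subset[OF assms finite_atLeastAtMost] .
  then show "sorted_wrt (<) (0 # sorted_list_of_set X @ [n + 1])"
    and "set (0 # sorted_list_of_set X @ [n + 1]) = insert 0 (insert (Suc n) X)"
    using assms by (auto simp: sorted_wrt_append strict_sorted_list_of_set)
qed

lemma distinct_gaps_nonempty: "X \<subseteq> {1..n} \<Longrightarrow> distinct (filter (\<lambda>D. D \<noteq> {}) (gaps n X))"
  unfolding gaps_def Let_def using distinct_nonempty_intervals[OF gap_bounds(1)] by simp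

lemma set_gaps_nonempty:
  assumes X: "X \<subseteq> {1..n}"
  shows "set (filter (\<lambda>D. D \<noteq> {}) (gaps n X)) = gap_set n X"
proof -
  define bs where "bs = 0 # sorted_list_of_set X @ [n + 1]"
  note sorted_bs = gap_bounds(1)[OF X, folded bs_def] and set_bs = gap_bounds(2)[OF X, folded bs_def]
  have "gaps n X = map (\<lambda>i. {bs!i<..<bs!(Suc i)}) [0..<length bs - 1]"
    unfolding gaps_def bs_def Let_def by simp
  then have gaps: "set (filter (\<lambda>D. D \<noteq> {}) (gaps n X))
      = {{bs!i<..<bs!(Suc i)} | i. Suc i < length bs \<and> {bs!i<..<bs!(Suc i)} \<noteq> {}}"
    by auto
  show ?thesis unfolding gaps
  proof (intro equalityI subsetI)
    fix D assume "D \<in> {{bs!i<..<bs!(Suc i)} | i. Suc i < length bs \<and> {bs!i<..<bs!(Suc i)} \<noteq> {}}"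
    then obtain i where i: "Suc i < length bs" "D = {bs!i<..<bs!(Suc i)}" "D \<noteq> {}" by blast
    then obtain x where x: "x \<in> D" by blast
    then have "D = gap_of n X x" using interval_eq_gap_of[OF sorted_bs set_bs X i(1)] i(2) by simp
    moreover from this have "x \<in> {1..n} - X" using x gap_of_subset by blast
    ultimately show "D \<in> gap_set n X" using gap_of_in_gap_set by blast
  next
    fix D assume "D \<in> gap_set n X"
    then obtain x where x: "x \<in> {1..n} - X" "D = gap_of n X x" unfolding gap_set_def by auto
    have "hd bs \<le> x" "x < last bs" "bs \<noteq> []" using x unfolding bs_def by auto
    then obtain i where i: "Suc i < length bs" "bs!i \<le> x" "x < bs!(Suc i)"
      using sorted_nth_interval_cover[of bs x] strict_sorted_imp_sorted[OF sorted_bs] by blast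
    have "bs!i \<noteq> x" using x(1) set_bs nth_mem[of i bs] i(1) by auto
    then have "x \<in> {bs!i<..<bs!(Suc i)}" using i by auto
    moreover from this have "D = {bs!i<..<bs!(Suc i)}"
      using interval_eq_gap_of[OF sorted_bs set_bs X i(1)] x(2) by simp
    ultimately show "D \<in> {{bs!i<..<bs!(Suc i)} | i. Suc i < length bs \<and> {bs!i<..<bs!(Suc i)} \<noteq> {}}"
      using i(1) by blast
  qed
qed

section \<open>Decomposition along the block containing 1\<close>

lemma partition_on_UN:
  assumes "partition_on A \<G>" and "\<And>G. G \<in> \<G> \<Longrightarrow> partition_on G (g G)"
  shows "partition_on A (\<Union>G\<in>\<G>. g G)"
proof (rule partition_onI)
  have "\<Union>(g G) = G" if "G \<in> \<G>" for G using partition_onD1[OF assms(2)[OF that]] by simp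
  then have "\<Union>(\<Union>G\<in>\<G>. g G) = \<Union>\<G>" by blast
  then show "\<Union>(\<Union>G\<in>\<G>. g G) = A" using partition_onD1[OF assms(1)] by simp
  show "{} \<notin> (\<Union>G\<in>\<G>. g G)" using assms(2) partition_onD3 by blast
  fix p q assume "p \<in> (\<Union>G\<in>\<G>. g G)" "q \<in> (\<Union>G\<in>\<G>. g G)" "p \<noteq> q"
  then obtain G1 G2 where G: "G1 \<in> \<G>" "G2 \<in> \<G>" "p \<in> g G1" "q \<in> g G2" by blast
  show "disjnt p q"
  proof (cases "G1 = G2")
    case True
    then show ?thesis
      using assms(2)[OF G(1)] G \<open>p \<noteq> q\<close> unfolding partition_on_def pairwise_def by blast
  next
    case False
    then have "disjnt G1 G2" using assms(1) G(1,2) unfolding partition_on_def pairwise_def by blast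
    moreover have "p \<subseteq> G1" "q \<subseteq> G2" using G assms(2) partition_onD1 by blast+
    ultimately show ?thesis by (meson disjnt_subset1 disjnt_subset2)
  qed
qed

text \<open>A noncrossing partition of \<open>[n]\<close> containing the block \<open>S \<ni> 1\<close> is \<open>S\<close> together with a
  noncrossing partition of each gap of \<open>S\<close>: no other block can straddle an element of \<open>S\<close>.\<close>

definition glue :: "nat \<Rightarrow> nat set \<Rightarrow> (nat set \<Rightarrow> part) \<Rightarrow> part" where
  "glue n S g = insert S (\<Union>G\<in>gap_set n S. g G)"

context
  fixes n :: nat and S :: "nat set"
  assumes S: "S \<subseteq> {1..n}" and one_in_S: "1 \<in> S"
begin

lemma partition_on_glue_part:
  assumes "g \<in> PiE (gap_set n S) nc_partitions" "G \<in> gap_set n S"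
  shows "partition_on G (g G)" and "noncrossing (g G)"
  using assms unfolding nc_partitions_def by auto

lemma glue_part_block:
  assumes "g \<in> PiE (gap_set n S) nc_partitions" "G \<in> gap_set n S" "B \<in> g G"
  shows "B \<subseteq> G" and "B \<noteq> {}"
  using partition_on_glue_part[OF assms(1,2)] assms(3) unfolding partition_on_def by auto

lemma S_notin_glue_part:
  assumes "g \<in> PiE (gap_set n S) nc_partitions" "G \<in> gap_set n S"
  shows "S \<notin> g G"
  using glue_part_block[OF assms] gap_set_subset[OF assms(2)] one_in_S by blast

lemma partition_on_glue:
  assumes g: "g \<in> PiE (gap_set n S) nc_partitions"
  shows "partition_on {1..n} (glue n S g)"
proof -
  have "partition_on ({1..n} - S) (\<Union>G\<in>gap_set n S. g G)"
    using partition_on_UN[OF partition_on_gap_set partition_on_glue_part(1)[OF g]] .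
  moreover from this have "disjnt S (\<Union>(\<Union>G\<in>gap_set n S. g G))"
    using partition_onD1 by (metis Diff_disjoint disjnt_def)
  ultimately show ?thesis
    unfolding glue_def using partition_on_insert S one_in_S by blast
qed

lemma noncrossing_glue:
  assumes g: "g \<in> PiE (gap_set n S) nc_partitions"
  shows "noncrossing (glue n S g)"
proof (rule noncrossingI)
  fix B1 B2 a b c d
  assume B: "B1 \<in> glue n S g" "B2 \<in> glue n S g" and less: "a < c" "c < b" "b < d"
    and mem: "a \<in> B1" "b \<in> B1" "c \<in> B2" "d \<in> B2"
  have in_gap: "\<exists>G\<in>gap_set n S. B \<in> g G \<and> B \<subseteq> G" if "B \<in> glue n S g" "B \<noteq> S" for B
    using that glue_part_block(1)[OF g] unfolding glue_def by blast
  consider "B1 = S" "B2 = S" | "B1 = S" "B2 \<noteq> S" | "B1 \<noteq> S" "B2 = S" | "B1 \<noteq> S" "B2 \<noteq> S"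
    by blast
  then show "B1 = B2"
  proof cases
    case 2
    then obtain G where "G \<in> gap_set n S" "c \<in> G" "d \<in> G" using in_gap B(2) mem by blast
    then show ?thesis using gap_set_not_separated 2 mem(2) less by blast
  next
    case 3
    then obtain G where "G \<in> gap_set n S" "a \<in> G" "b \<in> G" using in_gap B(1) mem by blast
    then show ?thesis using gap_set_not_separated 3 mem(3) less by blast
  next
    case 4
    then obtain G1 G2 where G: "G1 \<in> gap_set n S" "B1 \<in> g G1" "B1 \<subseteq> G1"
      "G2 \<in> gap_set n S" "B2 \<in> g G2" "B2 \<subseteq> G2"
      using in_gap B by meson
    then have "c \<in> G1"
      using gap_set_convex[OF G(1), of a b c] gap_set_subset[OF G(4)] mem less by blast
    then have "G1 = G2"
      using partition_on_block_unique[OF partition_on_gap_set G(1,4)] G(6) mem(3) by blast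
    then show ?thesis
      using noncrossingD[OF partition_on_glue_part(2)[OF g G(1)] G(2)] G(5) less mem by blast
  qed simp
qed

lemma glue_part_eq:
  assumes g: "g \<in> PiE (gap_set n S) nc_partitions" and G: "G \<in> gap_set n S"
  shows "g G = {B \<in> glue n S g. B \<subseteq> G}"
proof (intro equalityI subsetI)
  show "B \<in> {B \<in> glue n S g. B \<subseteq> G}" if "B \<in> g G" for B
    using that glue_part_block[OF g G] G unfolding glue_def by blast
  fix B assume B: "B \<in> {B \<in> glue n S g. B \<subseteq> G}"
  have "B \<noteq> S" using B one_in_S gap_set_subset[OF G] by blast
  then obtain G' where G': "G' \<in> gap_set n S" "B \<in> g G'" using B unfolding glue_def by auto
  obtain x where "x \<in> B" using glue_part_block[OF g G'] by blast
  then have "G' = G"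
    using partition_on_block_unique[OF partition_on_gap_set G'(1) G] glue_part_block[OF g G'] B
    by blast
  then show "B \<in> g G" using G' by simp
qed

lemma inj_on_glue: "inj_on (glue n S) (PiE (gap_set n S) nc_partitions)"
proof (rule inj_onI)
  fix g1 g2
  assume g: "g1 \<in> PiE (gap_set n S) nc_partitions" "g2 \<in> PiE (gap_set n S) nc_partitions"
    and "glue n S g1 = glue n S g2"
  then show "g1 = g2"
    using glue_part_eq[OF g(1)] glue_part_eq[OF g(2)] by (intro PiE_ext[OF g]) auto
qed

lemma block_subset_gap_of:
  assumes Q: "Q \<in> nc_partitions {1..n}" "S \<in> Q" and B: "B \<in> Q" "B \<noteq> S" "x \<in> B"
  shows "B \<subseteq> gap_of n S x"
proof
  have part: "partition_on {1..n} Q" and nc: "noncrossing Q"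
    using Q(1) unfolding nc_partitions_def by auto
  have disj: "B \<inter> S = {}" using partition_on_block_unique[OF part B(1) Q(2)] B(2) by blast
  have B_sub: "B \<subseteq> {1..n}" using part B(1) unfolding partition_on_def by blast
  fix y assume y: "y \<in> B"
  have "1 < z" if "z \<in> B" for z using that disj B_sub one_in_S by (fastforce simp: le_neq_implies_less)
  then have "\<not> (u < s \<and> s < v)" if "s \<in> S" "u \<in> B" "v \<in> B" for s u v
    using noncrossingD[OF nc Q(2) B(1), of 1 u s v] that one_in_S B(2) by auto
  then show "y \<in> gap_of n S x"
    using y B(3) B_sub disj unfolding gap_of_def by blast
qed

lemma nc_partition_restrict_gap:
  assumes Q: "Q \<in> nc_partitions {1..n}" "S \<in> Q" and G: "G \<in> gap_set n S"
  shows "{B \<in> Q. B \<subseteq> G} \<in> nc_partitions G"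
proof -
  have part: "partition_on {1..n} Q" and nc: "noncrossing Q"
    using Q(1) unfolding nc_partitions_def by auto
  have "G \<subseteq> \<Union>{B \<in> Q. B \<subseteq> G}"
  proof
    fix x assume x: "x \<in> G"
    then obtain B where B: "B \<in> Q" "x \<in> B" using part gap_set_subset[OF G] partition_onD1 by blast
    then have "B \<noteq> S" using x gap_set_subset[OF G] by blast
    then have "B \<subseteq> G"
      using block_subset_gap_of[OF Q B(1) _ B(2)] gap_set_eq_gap_of[OF G x] by simp
    then show "x \<in> \<Union>{B \<in> Q. B \<subseteq> G}" using B by blast
  qed
  then have "partition_on G {B \<in> Q. B \<subseteq> G}"
  proof (intro partition_onI)
    show "disjnt B1 B2" if "B1 \<in> {B \<in> Q. B \<subseteq> G}" "B2 \<in> {B \<in> Q. B \<subseteq> G}" "B1 \<noteq> B2" for B1 B2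
      using that part unfolding partition_on_def pairwise_def by blast
    show "{} \<notin> {B \<in> Q. B \<subseteq> G}" using partition_onD3[OF part] by blast
  qed blast
  moreover have "noncrossing {B \<in> Q. B \<subseteq> G}" by (rule noncrossing_subset[OF nc]) blast
  ultimately show ?thesis unfolding nc_partitions_def by simp
qed

lemma glue_image:
  "glue n S ` (PiE (gap_set n S) nc_partitions) = {Q \<in> nc_partitions {1..n}. S \<in> Q}"
proof (intro equalityI subsetI)
  show "Q \<in> {Q \<in> nc_partitions {1..n}. S \<in> Q}" if "Q \<in> glue n S ` (PiE (gap_set n S) nc_partitions)" for Q
    using that partition_on_glue noncrossing_glue unfolding nc_partitions_def glue_def by blast
  fix Q assume "Q \<in> {Q \<in> nc_partitions {1..n}. S \<in> Q}"
  then have Q: "Q \<in> nc_partitions {1..n}" "S \<in> Q" by auto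
  have part: "partition_on {1..n} Q" using Q(1) unfolding nc_partitions_def by auto
  define g where "g = (\<lambda>G\<in>gap_set n S. {B \<in> Q. B \<subseteq> G})"
  have g: "g \<in> PiE (gap_set n S) nc_partitions"
    unfolding g_def using nc_partition_restrict_gap[OF Q] by auto
  have "glue n S g = Q"
  proof (intro equalityI subsetI)
    show "B \<in> Q" if "B \<in> glue n S g" for B
      using that Q(2) unfolding glue_def g_def by auto
    fix B assume B: "B \<in> Q"
    show "B \<in> glue n S g"
    proof (cases "B = S")
      case False
      obtain x where x: "x \<in> B" using partition_onD3[OF part] B by (metis all_not_in_conv)
      have "B \<subseteq> {1..n} - S"
        using partition_on_block_unique[OF part B Q(2)] part B False unfolding partition_on_def by blast
      then have "gap_of n S x \<in> gap_set n S" using x gap_of_in_gap_set by blast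
      moreover have "B \<subseteq> gap_of n S x" using block_subset_gap_of[OF Q B False x] .
      ultimately show ?thesis unfolding glue_def g_def using B by auto
    qed (simp add: glue_def)
  qed
  then show "Q \<in> glue n S ` (PiE (gap_set n S) nc_partitions)" using g by blast
qed

lemma prod_glue:
  assumes g: "g \<in> PiE (gap_set n S) nc_partitions"
  shows "(\<Prod>\<pi>\<in>glue n S g. k (card \<pi>)) = k (card S) * (\<Prod>G\<in>gap_set n S. \<Prod>\<pi>\<in>g G. k (card \<pi>))"
proof -
  have fin: "finite (g G)" if "G \<in> gap_set n S" for G
    using finite_elements[OF finite_gap[OF that] partition_on_glue_part(1)[OF g that]] .
  have disj: "g G1 \<inter> g G2 = {}" if "G1 \<in> gap_set n S" "G2 \<in> gap_set n S" "G1 \<noteq> G2" for G1 G2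
  proof -
    have "disjnt G1 G2" using partition_on_gap_set that unfolding partition_on_def pairwise_def by blast
    then show ?thesis using glue_part_block[OF g] that unfolding disjnt_def by blast
  qed
  have "S \<notin> (\<Union>G\<in>gap_set n S. g G)" using S_notin_glue_part[OF g] by blast
  moreover have "finite (\<Union>G\<in>gap_set n S. g G)" using fin finite_gap_set by blast
  ultimately have "(\<Prod>\<pi>\<in>glue n S g. k (card \<pi>))
      = k (card S) * (\<Prod>\<pi>\<in>(\<Union>G\<in>gap_set n S. g G). k (card \<pi>))"
    unfolding glue_def by simp
  also have "(\<Prod>\<pi>\<in>(\<Union>G\<in>gap_set n S. g G). k (card \<pi>)) = (\<Prod>G\<in>gap_set n S. \<Prod>\<pi>\<in>g G. k (card \<pi>))"
    by (rule prod.UNION_disjoint[OF finite_gap_set]) (use fin disj in blast)+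
  finally show ?thesis .
qed

lemma sum_nc_partitions_with_block:
  "(\<Sum>Q\<in>{Q \<in> nc_partitions {1..n}. S \<in> Q}. \<Prod>\<pi>\<in>Q. k (card \<pi>))
     = k (card S) * (\<Prod>G\<in>gap_set n S. nc_moment k G)"
proof -
  have "(\<Prod>G\<in>gap_set n S. nc_moment k G)
      = (\<Sum>g\<in>PiE (gap_set n S) nc_partitions. \<Prod>G\<in>gap_set n S. \<Prod>\<pi>\<in>g G. k (card \<pi>))"
    unfolding nc_moment_def by (rule prod_sum_PiE[OF finite_gap_set finite_nc_partitions[OF finite_gap]])
  then have "k (card S) * (\<Prod>G\<in>gap_set n S. nc_moment k G)
      = (\<Sum>g\<in>PiE (gap_set n S) nc_partitions. k (card S) * (\<Prod>G\<in>gap_set n S. \<Prod>\<pi>\<in>g G. k (card \<pi>)))"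
    by (simp add: sum_distrib_left)
  also have "\<dots> = (\<Sum>g\<in>PiE (gap_set n S) nc_partitions. \<Prod>\<pi>\<in>glue n S g. k (card \<pi>))"
    by (rule sum.cong[OF refl]) (simp add: prod_glue)
  also have "\<dots> = (\<Sum>Q\<in>{Q \<in> nc_partitions {1..n}. S \<in> Q}. \<Prod>\<pi>\<in>Q. k (card \<pi>))"
    unfolding glue_image[symmetric] by (rule sum.reindex[OF inj_on_glue, symmetric, unfolded o_def])
  finally show ?thesis by simp
qed

end

lemma nc_moment_decompose:
  assumes "n \<ge> 1"
  shows "nc_moment k {1..n} = (\<Sum>S\<in>{S. S \<subseteq> {1..n} \<and> 1 \<in> S}. k (card S) * (\<Prod>G\<in>gap_set n S. nc_moment k G))"
proof -
  let ?I = "{S. S \<subseteq> {1..n} \<and> 1 \<in> S}"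
  let ?A = "\<lambda>S. {Q \<in> nc_partitions {1..n}. S \<in> Q}"
  have "nc_partitions {1..n} = (\<Union>S\<in>?I. ?A S)"
  proof (intro equalityI subsetI)
    fix Q assume Q: "Q \<in> nc_partitions {1..n}"
    then have part: "partition_on {1..n} Q" unfolding nc_partitions_def by auto
    have "1 \<in> \<Union>Q" using partition_onD1[OF part, symmetric] assms by simp
    then obtain B where "B \<in> Q" "1 \<in> B" by blast
    moreover have "B \<subseteq> {1..n}" using part \<open>B \<in> Q\<close> unfolding partition_on_def by blast
    ultimately show "Q \<in> (\<Union>S\<in>?I. ?A S)" using Q by blast
  qed blast
  then have "nc_moment k {1..n} = (\<Sum>Q\<in>(\<Union>S\<in>?I. ?A S). \<Prod>\<pi>\<in>Q. k (card \<pi>))"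
    unfolding nc_moment_def by (rule arg_cong)
  also have "\<dots> = (\<Sum>S\<in>?I. \<Sum>Q\<in>?A S. \<Prod>\<pi>\<in>Q. k (card \<pi>))"
  proof (rule sum.UNION_disjoint)
    show "finite ?I" by (rule finite_subset[of _ "Pow {1..n}"]) auto
    show "\<forall>S\<in>?I. finite (?A S)" using finite_nc_partitions[of "{1..n}"] by simp
    show "\<forall>S1\<in>?I. \<forall>S2\<in>?I. S1 \<noteq> S2 \<longrightarrow> ?A S1 \<inter> ?A S2 = {}"
    proof (intro ballI impI equals0I)
      fix S1 S2 Q assume "S1 \<in> ?I" "S2 \<in> ?I" "S1 \<noteq> S2" "Q \<in> ?A S1 \<inter> ?A S2"
      then show False
        using partition_on_block_unique[of "{1..n}" Q S1 S2 1] unfolding nc_partitions_def by auto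
    qed
  qed
  also have "\<dots> = (\<Sum>S\<in>?I. k (card S) * (\<Prod>G\<in>gap_set n S. nc_moment k G))"
    by (rule sum.cong[OF refl], rule sum_nc_partitions_with_block) auto
  finally show ?thesis .
qed

section \<open>Lowersets and cuts\<close>

lemma lowerset_subset: "lowerset P L \<Longrightarrow> L \<subseteq> P"
  unfolding lowerset_def by simp

lemma lowerset_empty: "lowerset P {}"
  unfolding lowerset_def by simp

lemma Union_lowerset_subset: "ncp n P \<Longrightarrow> lowerset P L \<Longrightarrow> \<Union>L \<subseteq> {1..n}"
  using lowerset_subset ncp_Union by blast

text \<open>A block outside a lowerset cannot straddle an element of the lowerset, as its convex hull
  would meet a block of the lowerset.\<close>

lemma lowerset_not_separated:
  assumes low: "lowerset P L" and B: "B \<in> P" "B \<notin> L" "finite B" "b1 \<in> B" "b2 \<in> B"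
    and s: "s \<in> \<Union>L"
  shows "\<not> (b1 < s \<and> s < b2)"
proof
  assume between: "b1 < s \<and> s < b2"
  obtain C where C: "C \<in> L" "s \<in> C" using s by blast
  have "Min B \<le> b1" "b2 \<le> Max B" using B by auto
  then have "s \<in> conv B" unfolding conv_def using between by auto
  then have "conv B \<inter> C \<noteq> {}" using C(2) by blast
  then have "(B, C) \<in> arrow P"
    unfolding arrow_def using B(1) C(1) lowerset_subset[OF low] by blast
  then show False using low C(1) B(2) unfolding lowerset_def by blast
qed

lemma block_subset_gap_of_lowerset:
  assumes P: "ncp n P" and low: "lowerset P L" and B: "B \<in> P" "B \<notin> L" and y: "y \<in> B"
  shows "B \<subseteq> gap_of n (\<Union>L) y"
proof
  have "B \<inter> \<Union>L = {}"
    using partition_on_block_unique[OF ncp_partition_on[OF P] B(1)] lowerset_subset[OF low] B(2) by blast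
  moreover have "B \<subseteq> {1..n}" using ncp_block_subset[OF P B(1)] .
  moreover have fin: "finite B" using ncp_block_finite[OF P B(1)] .
  fix z assume z: "z \<in> B"
  have "\<not> (y < s \<and> s < z) \<and> \<not> (z < s \<and> s < y)" if "s \<in> \<Union>L" for s
    using lowerset_not_separated[OF low B fin y z that] lowerset_not_separated[OF low B fin z y that]
    by blast
  ultimately show "z \<in> gap_of n (\<Union>L) y" using z unfolding gap_of_def by blast
qed

lemma trancl_target_eq:
  assumes "(a, b) \<in> R\<^sup>+" and "\<And>c. (c, b) \<in> R \<Longrightarrow> c = b"
  shows "a = b"
  using assms by (induction rule: trancl.induct) blast+

lemma lowerset_first_block:
  assumes P: "ncp n P" and \<pi>: "\<pi> \<in> P" "1 \<in> \<pi>"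
  shows "lowerset P {\<pi>}"
proof -
  have part: "partition_on {1..n} P" using ncp_partition_on[OF P] .
  have "\<tau> = \<pi>" if \<tau>: "\<tau> \<in> P" "conv \<tau> \<inter> \<pi> \<noteq> {}" for \<tau>
  proof (rule ccontr)
    assume ne: "\<tau> \<noteq> \<pi>"
    obtain x where x: "x \<in> conv \<tau>" "x \<in> \<pi>" using \<tau>(2) by blast
    have "finite \<tau>" "\<tau> \<noteq> {}"
      using ncp_block_finite[OF P \<tau>(1)] partition_onD3[OF part] \<tau>(1) by auto
    then have ends: "Min \<tau> \<in> \<tau>" "Max \<tau> \<in> \<tau>" by auto
    have not_in: "z \<notin> \<tau>" if "z \<in> \<pi>" for z
      using partition_on_block_unique[OF part \<tau>(1) \<pi>(1)] ne that by blast
    have "Min \<tau> < x" "x < Max \<tau>"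
      using x ends not_in[OF x(2)] unfolding conv_def by (auto simp: order_le_less)
    moreover have "Min \<tau> \<in> {1..n}" "Min \<tau> \<noteq> 1"
      using ends(1) not_in[OF \<pi>(2)] ncp_block_subset[OF P \<tau>(1)] by auto
    then have "1 < Min \<tau>" by simp
    ultimately have "\<pi> = \<tau>"
      using noncrossingD[OF ncp_noncrossing[OF P] \<pi>(1) \<tau>(1) _ _ _ \<pi>(2) x(2) ends] by blast
    then show False using ne by simp
  qed
  then show ?thesis
    unfolding lowerset_def arrow_def using \<pi>(1)
    by (auto dest!: trancl_target_eq[where b = \<pi>])
qed

lemma lowerset_Jpart:
  assumes "L \<subseteq> Jpart n"
  shows "lowerset (Jpart n) L"
proof -
  have "a = b" if "(a, b) \<in> arrow (Jpart n)" for a b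
    using that unfolding arrow_def
  proof (induction rule: trancl.induct)
    case (r_into_trancl a b)
    then show ?case unfolding Jpart_def conv_def by auto
  next
    case (trancl_into_trancl a b c)
    then show ?case unfolding Jpart_def conv_def by auto
  qed
  then show ?thesis unfolding lowerset_def using assms by blast
qed

lemma valid_mp_Cons: "valid_mp (P # rest) \<longleftrightarrow> (\<exists>n\<ge>1. ncp n P) \<and> valid_mp rest"
  unfolding valid_mp_def by simp

lemma finite_cuts1:
  assumes "valid_mp xs"
  shows "finite (cuts1 xs)"
proof -
  let ?A = "Pow (\<Union>(set xs))"
  have "finite P" if "P \<in> set xs" for P
    using assms that ncp_finite unfolding valid_mp_def by metis
  then have fin: "finite ?A" by simp
  have "cuts1 xs \<subseteq> {ls. set ls \<subseteq> ?A \<and> length ls = length xs}"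
  proof (rule subsetI, rule CollectI, rule conjI)
    fix ls assume ls: "ls \<in> cuts1 xs"
    then show len: "length ls = length xs" unfolding cuts1_def by simp
    show "set ls \<subseteq> ?A"
    proof
      fix L assume "L \<in> set ls"
      then obtain i where i: "i < length xs" "L = ls ! i" using len by (auto simp: in_set_conv_nth)
      then have "lowerset (xs ! i) L" using ls unfolding cuts1_def by simp
      then show "L \<in> ?A" using lowerset_subset nth_mem[OF i(1)] by blast
    qed
  qed
  then show ?thesis using finite_subset finite_lists_length_eq[OF fin] by blast
qed

lemma cuts1_single_nonempty:
  assumes "ls \<in> cuts1 (P # rest)" and "length (filter (\<lambda>L. L \<noteq> {}) ls) = 1"
  shows "ls = hd ls # replicate (length rest) {}" and "lowerset P (hd ls)" and "1 \<in> \<Union>(hd ls)"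
proof -
  obtain L ls' where ls: "ls = L # ls'" "length ls' = length rest"
    using assms(1) unfolding cuts1_def by (cases ls) auto
  have "lowerset ((P # rest) ! 0) (ls ! 0)" using assms(1) unfolding cuts1_def by blast
  then show "lowerset P (hd ls)" using ls by simp
  show one: "1 \<in> \<Union>(hd ls)" using assms(1) unfolding cuts1_def by blast
  then have "L \<noteq> {}" using ls by auto
  then have "filter (\<lambda>L. L \<noteq> {}) ls' = []" using assms(2) ls by simp
  then show "ls = hd ls # replicate (length rest) {}"
    using ls replicate_length_same[of ls' "{}"] by (simp add: filter_empty_conv)
qed

lemma cuts1_Cons_replicate:
  assumes "lowerset P L" "1 \<in> \<Union>L"
  shows "L # replicate (length rest) {} \<in> cuts1 (P # rest)"
  using assms lowerset_empty unfolding cuts1_def by (auto simp: nth_Cons split: nat.split)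

text \<open>Only cuts whose lower part is nonempty in exactly one factor can contribute to
  \<open>f \<prec> g\<close> when \<open>f\<close> vanishes on products; since \<open>1\<close> lies in the lower part, that factor is the first.\<close>

lemma sum_cuts1_single_factor:
  assumes v: "valid_mp (P # rest)"
    and w: "\<And>ls. ls \<in> cuts1 (P # rest) \<Longrightarrow> length (filter (\<lambda>L. L \<noteq> {}) ls) \<noteq> 1 \<Longrightarrow> w ls = 0"
  shows "(\<Sum>ls\<in>cuts1 (P # rest). w ls)
       = (\<Sum>L\<in>{L. lowerset P L \<and> 1 \<in> \<Union>L}. w (L # replicate (length rest) {}))"
proof -
  let ?A = "{L. lowerset P L \<and> 1 \<in> \<Union>L}"
  let ?c = "\<lambda>L. L # replicate (length rest) {}"
  have "?c ` ?A \<subseteq> cuts1 (P # rest)" using cuts1_Cons_replicate by blast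
  moreover have "w ls = 0" if ls: "ls \<in> cuts1 (P # rest) - ?c ` ?A" for ls
  proof (rule ccontr)
    assume "w ls \<noteq> 0"
    then have "length (filter (\<lambda>L. L \<noteq> {}) ls) = 1" using w ls by blast
    then have "ls = ?c (hd ls)" "hd ls \<in> ?A" using cuts1_single_nonempty[of ls P rest] ls by auto
    then show False using ls by blast
  qed
  ultimately have "(\<Sum>ls\<in>cuts1 (P # rest). w ls) = (\<Sum>ls\<in>?c ` ?A. w ls)"
    using finite_cuts1[OF v] by (intro sum.mono_neutral_right) auto
  also have "\<dots> = (\<Sum>L\<in>?A. w (?c L))"
    by (rule sum.reindex_cong[where l = ?c]) (auto simp: inj_on_def)
  finally show ?thesis by simp
qed

lemma ubar_ncp: "ncp n P \<Longrightarrow> ubar P L = map (\<lambda>D. stdz (restr P D)) (filter (\<lambda>D. D \<noteq> {}) (gaps n (\<Union>L)))"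
  unfolding ubar_def using ncp_Union by simp

lemma ubar_empty:
  assumes "ncp n P" "n \<ge> 1"
  shows "ubar P {} = [P]"
proof -
  have "restr P {0<..<Suc n} = P"
  proof -
    have eq: "B \<inter> {0<..<Suc n} = B" "B \<noteq> {}" if "B \<in> P" for B
      using ncp_block_subset[OF assms(1) that] partition_onD3[OF ncp_partition_on[OF assms(1)]] that
      by auto
    show ?thesis unfolding restr_def
    proof (intro equalityI subsetI)
      show "B \<in> {B \<inter> {0<..<Suc n} |B. B \<in> P \<and> B \<inter> {0<..<Suc n} \<noteq> {}}" if "B \<in> P" for B
        using eq[OF that] that by blast
    qed (use eq in auto)
  qed
  moreover have "1 \<in> {0<..<Suc n}" using assms(2) by simp
  then have "{0<..<Suc n} \<noteq> {}" by blast
  ultimately show ?thesis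
    using ubar_ncp[OF assms(1), of "{}"] stdz_ncp[OF assms(1)] by (simp add: gaps_def)
qed

lemma uword_Cons_replicate:
  assumes "valid_mp (P # rest)"
  shows "uword (P # rest) (L # replicate (length rest) {}) = ubar P L @ rest"
proof -
  have "concat (map (\<lambda>(P, L). ubar P L) (zip rest (replicate (length rest) {}))) = rest"
    if "valid_mp rest" for rest
    using that by (induction rest) (auto simp: valid_mp_Cons ubar_empty)
  then show ?thesis using assms unfolding uword_def valid_mp_Cons by simp
qed

lemma prec_Cons:
  assumes v: "valid_mp (P # rest)" and f: "\<And>xs. length xs \<noteq> 1 \<Longrightarrow> f xs = 0"
  shows "prec f g (P # rest) = (\<Sum>L\<in>{L. lowerset P L \<and> 1 \<in> \<Union>L}. f [stdz L] * g (ubar P L @ rest))"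
proof -
  have "prec f g (P # rest) = (\<Sum>ls\<in>cuts1 (P # rest). f (lword ls) * g (uword (P # rest) ls))"
    unfolding prec_def by simp
  also have "\<dots> = (\<Sum>L\<in>{L. lowerset P L \<and> 1 \<in> \<Union>L}.
      f (lword (L # replicate (length rest) {})) * g (uword (P # rest) (L # replicate (length rest) {})))"
    using f by (intro sum_cuts1_single_factor[OF v]) (simp add: lword_def)
  also have "\<dots> = (\<Sum>L\<in>{L. lowerset P L \<and> 1 \<in> \<Union>L}. f [stdz L] * g (ubar P L @ rest))"
    by (rule sum.cong[OF refl]) (auto simp: lword_def uword_Cons_replicate[OF v])
  finally show ?thesis .
qed

lemma ncp_stdz_restr:
  assumes P: "ncp n P" and G: "G \<subseteq> {1..n}"
  shows "ncp (card G) (stdz (restr P G))"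
proof -
  have "finite G" using G finite_subset by blast
  moreover have "restr P G = (\<inter>) G ` P - {{}}" unfolding restr_def by auto
  then have "partition_on G (restr P G)"
    using partition_on_restrict[OF ncp_partition_on[OF P], of G] G by (simp add: Int_absorb2)
  ultimately show ?thesis using ncp_stdz noncrossing_restr[OF ncp_noncrossing[OF P]] by blast
qed

lemma set_ubar:
  assumes "ncp n P" "lowerset P L"
  shows "set (ubar P L) = (\<lambda>G. stdz (restr P G)) ` gap_set n (\<Union>L)"
  unfolding ubar_ncp[OF assms(1)]
  using set_gaps_nonempty[OF Union_lowerset_subset[OF assms]] by simp

lemma prod_list_ubar:
  assumes "ncp n P" "lowerset P L"
  shows "prod_list (map F (ubar P L)) = (\<Prod>G\<in>gap_set n (\<Union>L). F (stdz (restr P G)))"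
proof -
  note X = Union_lowerset_subset[OF assms]
  have "prod_list (map F (ubar P L))
      = prod_list (map (\<lambda>G. F (stdz (restr P G))) (filter (\<lambda>D. D \<noteq> {}) (gaps n (\<Union>L))))"
    unfolding ubar_ncp[OF assms(1)] by (simp add: o_def)
  also have "\<dots> = (\<Prod>G\<in>set (filter (\<lambda>D. D \<noteq> {}) (gaps n (\<Union>L))). F (stdz (restr P G)))"
    by (rule prod.distinct_set_conv_list[OF distinct_gaps_nonempty[OF X], symmetric])
  also have "\<dots> = (\<Prod>G\<in>gap_set n (\<Union>L). F (stdz (restr P G)))"
    unfolding set_gaps_nonempty[OF X] ..
  finally show ?thesis .
qed

lemma ubar_factors:
  assumes P: "ncp n P" and low: "lowerset P L" and one: "1 \<in> \<Union>L" and Q: "Q \<in> set (ubar P L)"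
  obtains m where "1 \<le> m" "m < n" "ncp m Q"
proof -
  obtain G where G: "G \<in> gap_set n (\<Union>L)" "Q = stdz (restr P G)" using Q set_ubar[OF P low] by auto
  have sub: "G \<subseteq> {1..n} - \<Union>L" using gap_set_subset[OF G(1)] .
  moreover have "1 \<in> {1..n}" using one Union_lowerset_subset[OF P low] by blast
  ultimately have "G \<subset> {1..n}" using one by auto
  then have "card G < card {1..n}" by (rule psubset_card_mono[OF finite_atLeastAtMost])
  then have "card G < n" by simp
  moreover have "G \<noteq> {}" using partition_onD3[OF partition_on_gap_set] G(1) by auto
  then have "card G \<ge> 1" using finite_gap[OF G(1)] by (simp add: Suc_le_eq card_gt_0_iff)
  moreover have "ncp (card G) Q" using ncp_stdz_restr[OF P] sub G(2) by blast
  ultimately show ?thesis using that by blast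
qed

lemma valid_mp_ubar_append:
  assumes "ncp n P" "lowerset P L" "1 \<in> \<Union>L" "valid_mp rest"
  shows "valid_mp (ubar P L @ rest)"
  unfolding valid_mp_def
proof
  fix Q assume "Q \<in> set (ubar P L @ rest)"
  then consider "Q \<in> set (ubar P L)" | "Q \<in> set rest" by auto
  then show "\<exists>m\<ge>1. ncp m Q"
  proof cases
    case 1
    then show ?thesis by (rule ubar_factors[OF assms(1-3)]) blast
  next
    case 2
    then show ?thesis using assms(4) unfolding valid_mp_def by blast
  qed
qed

definition factor_sizes :: "mpart \<Rightarrow> nat multiset" where
  "factor_sizes xs = mset (map (\<lambda>P. card (\<Union>P)) xs)"

lemma factor_sizes_ubar_append_less:
  assumes P: "ncp n P" and low: "lowerset P L" and one: "1 \<in> \<Union>L"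
  shows "(factor_sizes (ubar P L @ rest), factor_sizes (P # rest)) \<in> mult less_than"
proof -
  have "(factor_sizes rest + factor_sizes (ubar P L), factor_sizes rest + {#n#}) \<in> mult less_than"
  proof (rule one_step_implies_mult)
    show "\<forall>k\<in>#factor_sizes (ubar P L). \<exists>j\<in>#{#n#}. (k, j) \<in> less_than"
    proof
      fix k assume "k \<in># factor_sizes (ubar P L)"
      then obtain Q where Q: "Q \<in> set (ubar P L)" "k = card (\<Union>Q)" unfolding factor_sizes_def by auto
      obtain m where "m < n" "ncp m Q" by (rule ubar_factors[OF P low one Q(1)])
      then show "\<exists>j\<in>#{#n#}. (k, j) \<in> less_than" using ncp_Union Q(2) by simp
    qed
  qed simp
  moreover have "factor_sizes (P # rest) = factor_sizes rest + {#n#}"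
    unfolding factor_sizes_def using ncp_Union[OF P] by simp
  ultimately show ?thesis unfolding factor_sizes_def by (simp add: add.commute)
qed

lemma valid_mp_induct[consumes 1, case_names Nil Cons]:
  assumes "valid_mp xs"
    and Nil: "Q []"
    and Cons: "\<And>P rest n. ncp n P \<Longrightarrow> n \<ge> 1 \<Longrightarrow> valid_mp (P # rest) \<Longrightarrow>
      (\<And>L. lowerset P L \<Longrightarrow> 1 \<in> \<Union>L \<Longrightarrow> Q (ubar P L @ rest)) \<Longrightarrow> Q (P # rest)"
  shows "Q xs"
  using wf_inv_image[OF wf_mult[OF wf_less_than], of factor_sizes] assms(1)
proof (induction xs rule: wf_induct_rule)
  case (less xs)
  show ?case
  proof (cases xs)
    case (Cons P rest)
    then obtain n where n: "ncp n P" "n \<ge> 1" and v: "valid_mp rest"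
      using less.prems valid_mp_Cons by auto
    show ?thesis unfolding Cons
    proof (rule assms(3)[OF n])
      show "valid_mp (P # rest)" using less.prems Cons by simp
      show "Q (ubar P L @ rest)" if "lowerset P L" "1 \<in> \<Union>L" for L
        using less.IH factor_sizes_ubar_append_less[OF n(1) that] valid_mp_ubar_append[OF n(1) that v] Cons
        by simp
    qed
  qed (simp add: Nil)
qed

section \<open>Solving the half-shuffle recursions\<close>

lemma finite_lowersets:
  assumes "ncp n P"
  shows "finite {L. lowerset P L \<and> 1 \<in> \<Union>L}"
proof (rule finite_subset)
  show "{L. lowerset P L \<and> 1 \<in> \<Union>L} \<subseteq> Pow P" using lowerset_subset by blast
  show "finite (Pow P)" using ncp_finite[OF assms] by simp
qed

lemma e_inf_stdz_lowerset:
  assumes P: "ncp n P" and \<pi>: "\<pi> \<in> P" "1 \<in> \<pi>" and L: "lowerset P L" "1 \<in> \<Union>L"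
  shows "e_inf [stdz L] = (if L = {\<pi>} then 1 else 0)"
proof -
  have "finite (\<Union>L)" using finite_subset[OF Union_lowerset_subset[OF P L(1)] finite_atLeastAtMost] .
  then have "card (stdz L) = card L" by (rule card_stdz)
  moreover have "card L = 1 \<longleftrightarrow> L = {\<pi>}"
  proof
    assume "card L = 1"
    then obtain B where B: "L = {B}" by (rule card_1_singletonE)
    then have "B \<in> P" "1 \<in> B" using L lowerset_subset by auto
    then have "B = \<pi>" using partition_on_block_unique[OF ncp_partition_on[OF P] _ \<pi>(1) _ \<pi>(2)] by blast
    then show "L = {\<pi>}" using B by simp
  qed simp
  ultimately show ?thesis unfolding e_inf_def by simp
qed

lemma psi_eq_one:
  fixes \<psi> :: "mpart \<Rightarrow> 'a::comm_ring_1"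
  assumes \<psi>: "\<forall>xs. valid_mp xs \<longrightarrow> \<psi> xs = eps xs + prec e_inf \<psi> xs" and "valid_mp xs"
  shows "\<psi> xs = 1"
  using assms(2)
proof (induction rule: valid_mp_induct)
  case Nil
  then show ?case using \<psi> by (simp add: eps_def prec_def valid_mp_def)
next
  case (Cons P rest n)
  have "1 \<in> \<Union>P" using ncp_Union[OF Cons.hyps(1)] Cons.hyps(2) by simp
  then obtain \<pi> where \<pi>: "\<pi> \<in> P" "1 \<in> \<pi>" by blast
  have "\<psi> (P # rest) = prec e_inf \<psi> (P # rest)" using \<psi> Cons.hyps(3) by (simp add: eps_def)
  also have "\<dots> = (\<Sum>L\<in>{L. lowerset P L \<and> 1 \<in> \<Union>L}. e_inf [stdz L] * \<psi> (ubar P L @ rest))"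
    by (rule prec_Cons[OF Cons.hyps(3)]) (auto simp: e_inf_def split: list.split)
  also have "\<dots> = (\<Sum>L\<in>{L. lowerset P L \<and> 1 \<in> \<Union>L}. if L = {\<pi>} then 1 else 0)"
  proof (rule sum.cong[OF refl])
    fix L assume "L \<in> {L. lowerset P L \<and> 1 \<in> \<Union>L}"
    then have L: "lowerset P L" "1 \<in> \<Union>L" by auto
    show "e_inf [stdz L] * \<psi> (ubar P L @ rest) = (if L = {\<pi>} then 1 else 0)"
      using e_inf_stdz_lowerset[OF Cons.hyps(1) \<pi> L] Cons.IH[OF L] by simp
  qed
  also have "\<dots> = 1"
    using finite_lowersets[OF Cons.hyps(1)] lowerset_first_block[OF Cons.hyps(1) \<pi>] \<pi>(2) by simp
  finally show ?case .
qed

lemma Union_Jpart: "\<Union>(Jpart n) = {1..n}"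
  unfolding Jpart_def by auto

lemma card_Jpart: "card (Jpart n) = n"
  unfolding Jpart_def by (subst card_image) (auto simp: inj_on_def)

lemma kappa_Jpart: "kappa k [Jpart n] = k n"
  unfolding kappa_def using Union_Jpart[of n] by simp

lemma restr_Jpart: "G \<subseteq> {1..n} \<Longrightarrow> restr (Jpart n) G = (\<lambda>i. {i}) ` G"
  unfolding restr_def Jpart_def by auto

lemma ncp_ne_Jpart_ex_block:
  assumes P: "ncp n P" and ne: "P \<noteq> Jpart n"
  shows "\<exists>B\<in>P. card B \<noteq> 1"
proof (rule ccontr)
  assume "\<not> (\<exists>B\<in>P. card B \<noteq> 1)"
  then have singleton: "\<exists>x. B = {x}" if "B \<in> P" for B
    using that by (meson card_1_singletonE)
  have "P = Jpart n"
  proof (intro equalityI subsetI)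
    fix B assume B: "B \<in> P"
    then obtain x where "B = {x}" using singleton by blast
    then show "B \<in> Jpart n" using ncp_block_subset[OF P B] unfolding Jpart_def by auto
  next
    fix B assume "B \<in> Jpart n"
    then obtain i where i: "i \<in> {1..n}" "B = {i}" unfolding Jpart_def by blast
    then obtain C where C: "C \<in> P" "i \<in> C" using ncp_Union[OF P] by blast
    then show "B \<in> P" using singleton[OF C(1)] i by auto
  qed
  then show False using ne by simp
qed

lemma card_lt_if_ne_Jpart:
  assumes P: "ncp n P" and ne: "P \<noteq> Jpart n"
  shows "card P < n"
proof -
  have ge1: "1 \<le> card C" if "C \<in> P" for C
  proof -
    have "C \<noteq> {}" using partition_onD3[OF ncp_partition_on[OF P]] that by auto
    then show ?thesis using ncp_block_finite[OF P that] by (simp add: Suc_le_eq card_gt_0_iff)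
  qed
  obtain B where B: "B \<in> P" "card B \<noteq> 1" using ncp_ne_Jpart_ex_block[OF P ne] by blast
  then have "1 < card B" using ge1[OF B(1)] by linarith
  then have "\<exists>B\<in>P. 1 < card B" using B(1) by blast
  then have "(\<Sum>C\<in>P. 1) < (\<Sum>C\<in>P. card C)"
    using ge1 by (intro sum_strict_mono_ex1[OF ncp_finite[OF P]]) auto
  also have "\<dots> = n"
    using product_partition[OF ncp_partition_on[OF P] ncp_block_finite[OF P]] by simp
  finally show ?thesis by simp
qed

definition Jpart_moment :: "(nat \<Rightarrow> 'a::comm_ring_1) \<Rightarrow> part \<Rightarrow> 'a" where
  "Jpart_moment k P = (if P = Jpart (card (\<Union>P)) then nc_moment k {1..card (\<Union>P)} else 0)"

lemma Jpart_moment_Jpart: "Jpart_moment k (Jpart n) = nc_moment k {1..n}"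
  unfolding Jpart_moment_def Union_Jpart by simp

lemma Jpart_moment_ncp:
  assumes "ncp n P"
  shows "Jpart_moment k P = (if P = Jpart n then nc_moment k {1..n} else 0)"
  unfolding Jpart_moment_def ncp_Union[OF assms] by simp

lemma stdz_restr_Jpart:
  assumes "G \<subseteq> {1..n}"
  shows "stdz (restr (Jpart n) G) = Jpart (card G)"
  unfolding restr_Jpart[OF assms] using stdz_singletons finite_subset[OF assms finite_atLeastAtMost] .

lemma kappa_stdz_eq_0: "finite (\<Union>Q) \<Longrightarrow> B \<in> Q \<Longrightarrow> card B \<noteq> 1 \<Longrightarrow> kappa k [stdz Q] = 0"
  unfolding kappa_def using stdz_ne_Jpart by auto

lemma Jpart_moment_stdz_eq_0: "finite (\<Union>Q) \<Longrightarrow> B \<in> Q \<Longrightarrow> card B \<noteq> 1 \<Longrightarrow> Jpart_moment k (stdz Q) = 0"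
  unfolding Jpart_moment_def using stdz_ne_Jpart by auto

lemma restr_block: "B \<in> P \<Longrightarrow> B \<subseteq> X \<Longrightarrow> B \<noteq> {} \<Longrightarrow> B \<in> restr P X"
  unfolding restr_def by blast

lemma lowersets_Jpart:
  "{L. lowerset (Jpart n) L \<and> 1 \<in> \<Union>L} = (\<lambda>S. (\<lambda>i. {i}) ` S) ` {S. S \<subseteq> {1..n} \<and> 1 \<in> S}"
proof (intro equalityI subsetI)
  fix L assume L: "L \<in> {L. lowerset (Jpart n) L \<and> 1 \<in> \<Union>L}"
  then have "L \<subseteq> Jpart n" using lowerset_subset by blast
  then have "L = (\<lambda>i. {i}) ` (\<Union>L)" "\<Union>L \<subseteq> {1..n}" unfolding Jpart_def by blast+
  then show "L \<in> (\<lambda>S. (\<lambda>i. {i}) ` S) ` {S. S \<subseteq> {1..n} \<and> 1 \<in> S}" using L by blast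
next
  fix L assume "L \<in> (\<lambda>S. (\<lambda>i. {i}) ` S) ` {S. S \<subseteq> {1..n} \<and> 1 \<in> S}"
  then obtain S where S: "S \<subseteq> {1..n}" "1 \<in> S" "L = (\<lambda>i. {i}) ` S" by blast
  then have "L \<subseteq> Jpart n" unfolding Jpart_def by auto
  then show "L \<in> {L. lowerset (Jpart n) L \<and> 1 \<in> \<Union>L}" using lowerset_Jpart S by auto
qed

lemma cut_sum_Jpart:
  assumes "n \<ge> 1"
  shows "(\<Sum>L\<in>{L. lowerset (Jpart n) L \<and> 1 \<in> \<Union>L}.
            kappa k [stdz L] * (\<Prod>G\<in>gap_set n (\<Union>L). Jpart_moment k (stdz (restr (Jpart n) G))))
       = nc_moment k {1..n}"
proof -
  let ?s = "\<lambda>S. (\<lambda>i. {i}) ` (S::nat set)"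
  have "kappa k [stdz (?s S)] * (\<Prod>G\<in>gap_set n (\<Union>(?s S)). Jpart_moment k (stdz (restr (Jpart n) G)))
      = k (card S) * (\<Prod>G\<in>gap_set n S. nc_moment k G)" if S: "S \<subseteq> {1..n}" for S
  proof -
    have "kappa k [stdz (?s S)] = k (card S)"
      using stdz_singletons[OF finite_subset[OF S finite_atLeastAtMost]] kappa_Jpart by simp
    moreover have "Jpart_moment k (stdz (restr (Jpart n) G)) = nc_moment k G" if G: "G \<in> gap_set n S" for G
    proof -
      have "G \<subseteq> {1..n}" using gap_set_subset[OF G] by blast
      then show ?thesis
        using stdz_restr_Jpart Jpart_moment_Jpart nc_moment_card[OF finite_gap[OF G], of k] by simp
    qed
    moreover have "\<Union>(?s S) = S" by blast
    ultimately show ?thesis by simp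
  qed
  moreover have "inj_on ?s {S. S \<subseteq> {1..n} \<and> 1 \<in> S}" by (rule inj_onI) (auto simp: set_eq_iff)
  ultimately have "(\<Sum>L\<in>{L. lowerset (Jpart n) L \<and> 1 \<in> \<Union>L}.
            kappa k [stdz L] * (\<Prod>G\<in>gap_set n (\<Union>L). Jpart_moment k (stdz (restr (Jpart n) G))))
      = (\<Sum>S\<in>{S. S \<subseteq> {1..n} \<and> 1 \<in> S}. k (card S) * (\<Prod>G\<in>gap_set n S. nc_moment k G))"
    unfolding lowersets_Jpart by (intro sum.reindex_cong[where l = ?s]) auto
  also have "\<dots> = nc_moment k {1..n}" by (rule nc_moment_decompose[OF assms, symmetric])
  finally show ?thesis .
qed

lemma cut_sum_not_Jpart:
  assumes P: "ncp n P" and ne: "P \<noteq> Jpart n"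
  shows "(\<Sum>L\<in>{L. lowerset P L \<and> 1 \<in> \<Union>L}.
            kappa k [stdz L] * (\<Prod>G\<in>gap_set n (\<Union>L). Jpart_moment k (stdz (restr P G)))) = 0"
proof (rule sum.neutral, rule ballI)
  obtain B where B: "B \<in> P" "card B \<noteq> 1" using ncp_ne_Jpart_ex_block[OF P ne] by blast
  fix L assume "L \<in> {L. lowerset P L \<and> 1 \<in> \<Union>L}"
  then have low: "lowerset P L" by simp
  have fin: "finite (\<Union>X)" if "\<Union>X \<subseteq> {1..n}" for X :: part
    using finite_subset[OF that finite_atLeastAtMost] .
  show "kappa k [stdz L] * (\<Prod>G\<in>gap_set n (\<Union>L). Jpart_moment k (stdz (restr P G))) = 0"
  proof (cases "B \<in> L")
    case True
    then have "kappa k [stdz L] = 0"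
      by (rule kappa_stdz_eq_0[OF fin[OF Union_lowerset_subset[OF P low]] _ B(2)])
    then show ?thesis by simp
  next
    case False
    obtain y where y: "y \<in> B" using partition_onD3[OF ncp_partition_on[OF P]] B(1) by (metis all_not_in_conv)
    let ?G = "gap_of n (\<Union>L) y"
    have BG: "B \<subseteq> ?G" using block_subset_gap_of_lowerset[OF P low B(1) False y] .
    have "y \<in> {1..n} - \<Union>L" using BG y gap_of_subset by blast
    then have G: "?G \<in> gap_set n (\<Union>L)" by (rule gap_of_in_gap_set)
    have "B \<in> restr P ?G" using restr_block[OF B(1) BG] y by blast
    moreover have "\<Union>(restr P ?G) \<subseteq> {1..n}" using gap_set_subset[OF G] unfolding restr_def by blast
    ultimately have "Jpart_moment k (stdz (restr P ?G)) = 0"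
      using Jpart_moment_stdz_eq_0[OF fin _ B(2)] by blast
    then have "(\<Prod>G\<in>gap_set n (\<Union>L). Jpart_moment k (stdz (restr P G))) = 0"
      using G finite_gap_set by (intro prod_zero) auto
    then show ?thesis by simp
  qed
qed

lemma cut_sum_Jpart_moment:
  assumes "ncp n P" "n \<ge> 1"
  shows "(\<Sum>L\<in>{L. lowerset P L \<and> 1 \<in> \<Union>L}.
            kappa k [stdz L] * (\<Prod>G\<in>gap_set n (\<Union>L). Jpart_moment k (stdz (restr P G))))
       = Jpart_moment k P"
proof (cases "P = Jpart n")
  case True
  then show ?thesis using cut_sum_Jpart[OF assms(2), of k] Jpart_moment_Jpart[of k n] by simp
next
  case False
  then show ?thesis using cut_sum_not_Jpart[OF assms(1) False, of k] Jpart_moment_ncp[OF assms(1), of k] by simp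
qed

lemma phi_eq_prod_list:
  fixes \<phi> :: "mpart \<Rightarrow> 'a::comm_ring_1"
  assumes \<phi>: "\<forall>xs. valid_mp xs \<longrightarrow> \<phi> xs = eps xs + prec (kappa k) \<phi> xs" and "valid_mp xs"
  shows "\<phi> xs = prod_list (map (Jpart_moment k) xs)"
  using assms(2)
proof (induction rule: valid_mp_induct)
  case Nil
  then show ?case using \<phi> by (simp add: eps_def prec_def valid_mp_def)
next
  case (Cons P rest n)
  let ?R = "prod_list (map (Jpart_moment k) rest)"
  have "\<phi> (P # rest) = prec (kappa k) \<phi> (P # rest)" using \<phi> Cons.hyps(3) by (simp add: eps_def)
  also have "\<dots> = (\<Sum>L\<in>{L. lowerset P L \<and> 1 \<in> \<Union>L}. kappa k [stdz L] * \<phi> (ubar P L @ rest))"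
    by (rule prec_Cons[OF Cons.hyps(3)]) (auto simp: kappa_def split: list.split)
  also have "\<dots> = (\<Sum>L\<in>{L. lowerset P L \<and> 1 \<in> \<Union>L}.
      kappa k [stdz L] * (\<Prod>G\<in>gap_set n (\<Union>L). Jpart_moment k (stdz (restr P G)))) * ?R"
    unfolding sum_distrib_right
  proof (rule sum.cong[OF refl])
    fix L assume "L \<in> {L. lowerset P L \<and> 1 \<in> \<Union>L}"
    then have L: "lowerset P L" "1 \<in> \<Union>L" by auto
    show "kappa k [stdz L] * \<phi> (ubar P L @ rest)
        = kappa k [stdz L] * (\<Prod>G\<in>gap_set n (\<Union>L). Jpart_moment k (stdz (restr P G))) * ?R"
      using Cons.IH[OF L] prod_list_ubar[OF Cons.hyps(1) L(1), of "Jpart_moment k"] by (simp add: mult.assoc)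
  qed
  also have "\<dots> = Jpart_moment k P * ?R" by (simp only: cut_sum_Jpart_moment[OF Cons.hyps(1,2)])
  finally show ?case by simp
qed

lemma Kchar_quot: "Kchar f (quot P Q) = (\<Prod>\<tau>\<in>Q. f [stdz (restr P \<tau>)])"
  unfolding Kchar_def quot_def prod_unfold_prod_mset by (simp add: multiset.map_comp o_def)

lemma sum_refinements_Kchar_kappa:
  assumes P: "ncp n P"
  shows "(\<Sum>Q\<in>{Q. ncp n Q \<and> refines P Q}. Kchar (kappa k) (quot P Q)) = Jpart_moment k P"
proof (cases "P = Jpart n")
  case True
  have "refines P Q" if "ncp n Q" for Q
    using ncp_Union[OF that] unfolding refines_def True Jpart_def by blast
  moreover have "Kchar (kappa k) (quot P Q) = (\<Prod>\<tau>\<in>Q. k (card \<tau>))" if Q: "ncp n Q" for Q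
    unfolding Kchar_quot True
    using stdz_restr_Jpart[OF ncp_block_subset[OF Q]] kappa_Jpart by (intro prod.cong) auto
  ultimately have "(\<Sum>Q\<in>{Q. ncp n Q \<and> refines P Q}. Kchar (kappa k) (quot P Q)) = nc_moment k {1..n}"
    unfolding nc_moment_def ncp_iff_nc_partitions by (intro sum.cong) auto
  then show ?thesis using Jpart_moment_Jpart[of k n] True by simp
next
  case False
  obtain B where B: "B \<in> P" "card B \<noteq> 1" using ncp_ne_Jpart_ex_block[OF P False] by blast
  have "B \<noteq> {}" using partition_onD3[OF ncp_partition_on[OF P]] B(1) by auto
  have "Kchar (kappa k) (quot P Q) = 0" if Q: "ncp n Q" "refines P Q" for Q
    unfolding Kchar_quot
  proof (rule prod_zero)
    obtain \<tau> where \<tau>: "\<tau> \<in> Q" "B \<subseteq> \<tau>" using Q(2) B(1) unfolding refines_def by blast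
    have "\<Union>(restr P \<tau>) \<subseteq> {1..n}" using ncp_block_subset[OF Q(1) \<tau>(1)] unfolding restr_def by blast
    then have "kappa k [stdz (restr P \<tau>)] = 0"
      using kappa_stdz_eq_0[OF finite_subset[OF _ finite_atLeastAtMost] restr_block[OF B(1) \<tau>(2) \<open>B \<noteq> {}\<close>] B(2)]
      by blast
    then show "\<exists>\<tau>\<in>Q. kappa k [stdz (restr P \<tau>)] = 0" using \<tau>(1) by blast
  qed (rule ncp_finite[OF Q(1)])
  then show ?thesis using Jpart_moment_ncp[OF P] False by simp
qed

theorem mainTheorem14:
  fixes k :: "nat \<Rightarrow> 'a::field" and n :: nat and P :: part
    and \<phi> \<psi> :: "mpart \<Rightarrow> 'a"
  assumes "n \<ge> 1" and "ncp n P"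
    and "\<forall>xs. valid_mp xs \<longrightarrow> \<phi> xs = eps xs + prec (kappa k) \<phi> xs"
    and "\<forall>xs. valid_mp xs \<longrightarrow> \<psi> xs = eps xs + prec e_inf \<psi> xs"
  shows "\<phi> [P] = act \<psi> (Kchar (kappa k)) n P
       \<and> act \<psi> (Kchar (kappa k)) n P
           = (\<Sum>Q\<in>{Q. ncp n Q \<and> refines P Q}. Kchar (kappa k) (quot P Q))
       \<and> (card P < n \<longrightarrow> (\<Sum>Q\<in>{Q. ncp n Q \<and> refines P Q}. Kchar (kappa k) (quot P Q)) = 0)
       \<and> (card P = n \<longrightarrow> (\<Sum>Q\<in>{Q. ncp n Q \<and> refines P Q}. Kchar (kappa k) (quot P Q))
                          = (\<Sum>Q\<in>{Q. ncp n Q}. \<Prod>\<pi>\<in>Q. k (card \<pi>)))"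
proof -
  have valid: "valid_mp [Q]" if "ncp n Q" for Q
    unfolding valid_mp_def using assms(1) that by auto
  have "\<phi> [P] = Jpart_moment k P"
    using phi_eq_prod_list[OF assms(3) valid[OF assms(2)]] by simp
  moreover have "act \<psi> (Kchar (kappa k)) n P = (\<Sum>Q\<in>{Q. ncp n Q \<and> refines P Q}. Kchar (kappa k) (quot P Q))"
    unfolding act_def using psi_eq_one[OF assms(4) valid] by simp
  moreover have "P = Jpart n \<longleftrightarrow> card P = n"
    using card_Jpart card_lt_if_ne_Jpart[OF assms(2)] by fastforce
  ultimately show ?thesis
    using sum_refinements_Kchar_kappa[OF assms(2), of k] Jpart_moment_ncp[OF assms(2), of k]
    unfolding nc_moment_def ncp_iff_nc_partitions by auto
qed

end
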